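(* Let $(H,h)$ be an equivariant pair and let $\{(H_n,h_n)\}$ be a tame sequence derived from $(H,h)$. Then there exist $f,g\in\mathcal{I}$ such that, setting $H'=fHg$ and $h'=fhg$, there is a subsequence along which $H_n$ converges to $H'$ uniformly on compact subsets of $\mathbb{H}^3$ and $h_n$ converges to $h'$ uniformly on $S$.
   Context: $\mathbb{H}^3$ is the upper half space model $\mathbb{C}\times(0,\infty)$ of hyperbolic $3$-space, with ideal boundary the Riemann sphere $S=\mathbb{C}\cup\{\infty\}$ (uniform convergence on $S$ is with respect to the spherical metric); $\mathcal{I}$ is the isometry group of $\mathbb{H}^3$, and each element of $\mathcal{I}$ extends to a conformal transformation of $S$, so $\mathcal{I}$ acts on $\mathbb{H}^3\cup S$. A nice lattice is a subgroup $\Gamma\subset\mathcal{I}$ acting freely, properly discontinuously and cocompactly on $\mathbb{H}^3$. An equivariant pair $(H,h)$ consists of a bi-Lipschitz bijection $H:\mathbb{H}^3\to\mathbb{H}^3$ and a homeomorphism $h:S\to S$ such that $H\cup h$ is continuous on $\mathbb{H}^3\cup S$, together with nice lattices $\Gamma_1,\Gamma_2$ with $H\Gamma_1H^{-1}=\Gamma_2$ and $h\Gamma_1h^{-1}=\Gamma_2$. A sequence $\{(H_n,h_n)\}$ is derived from $(H,h)$ if $H_n=f_nHg_n$ and $h_n=f_nhg_n$ for some $f_n,g_n\in\mathcal{I}$; it is tame if $\{H_n(p)\}$ is bounded for every $p\in\mathbb{H}^3$. *)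

theory Defs
  imports "HOL-Analysis.Analysis" "HOL-Library.FuncSet"
begin

type_synonym hpt = "complex \<times> real"
type_synonym spt = "complex option"       (* Riemann sphere: Some z, None = \<infinity> *)

definition H3 :: "hpt set" where
  "H3 = {p. snd p > 0}"

definition hdist :: "hpt \<Rightarrow> hpt \<Rightarrow> real" where
  "hdist p q = arcosh (1 + ((cmod (fst p - fst q))\<^sup>2 + (snd p - snd q)\<^sup>2) / (2 * snd p * snd q))"

text \<open>Embedding of the closed upper half space (plus \<infinity>) onto the closed unit ball of
  R^3 = C x R, by inversion in the sphere of radius sqrt 2 centred at (0,-1).
  On the boundary it is inverse stereographic projection, so the induced metric on S
  is the chordal (spherical) metric.\<close>

definition phiH :: "hpt \<Rightarrow> complex \<times> real" where
  "phiH p = (let D = (cmod (fst p))\<^sup>2 + (snd p + 1)\<^sup>2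
             in (of_real (2 / D) * fst p, -1 + 2 * (snd p + 1) / D))"

definition phiS :: "spt \<Rightarrow> complex \<times> real" where
  "phiS x = (case x of None \<Rightarrow> (0, -1) | Some z \<Rightarrow> phiH (z, 0))"

definition sdist :: "spt \<Rightarrow> spt \<Rightarrow> real" where
  "sdist a b = dist (phiS a) (phiS b)"

definition Hbar :: "(hpt + spt) set" where
  "Hbar = Inl ` H3 \<union> range Inr"

fun bemb :: "hpt + spt \<Rightarrow> complex \<times> real" where
  "bemb (Inl p) = phiH p"
| "bemb (Inr x) = phiS x"

fun bext :: "(hpt \<Rightarrow> hpt) \<Rightarrow> (spt \<Rightarrow> spt) \<Rightarrow> hpt + spt \<Rightarrow> hpt + spt" where
  "bext F f (Inl p) = Inl (F p)"
| "bext F f (Inr x) = Inr (f x)"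

definition bar_continuous :: "(hpt \<Rightarrow> hpt) \<Rightarrow> (spt \<Rightarrow> spt) \<Rightarrow> bool" where
  "bar_continuous F f \<longleftrightarrow>
     (\<forall>x\<in>Hbar. \<forall>e>0. \<exists>d>0. \<forall>y\<in>Hbar.
        dist (bemb y) (bemb x) < d \<longrightarrow> dist (bemb (bext F f y)) (bemb (bext F f x)) < e)"

text \<open>An element of the isometry group is represented by the pair (isometry of H3,
  its boundary extension); the H3-part is made extensional on H3.\<close>
definition Isom :: "((hpt \<Rightarrow> hpt) \<times> (spt \<Rightarrow> spt)) set" where
  "Isom = {(G, g). G \<in> extensional H3 \<and> bij_betw G H3 H3 \<and>
                   (\<forall>p\<in>H3. \<forall>q\<in>H3. hdist (G p) (G q) = hdist p q) \<and>
                   bar_continuous G g}"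

definition iso_id :: "(hpt \<Rightarrow> hpt) \<times> (spt \<Rightarrow> spt)" where
  "iso_id = (restrict id H3, id)"

definition iso_comp ::
  "(hpt \<Rightarrow> hpt) \<times> (spt \<Rightarrow> spt) \<Rightarrow> (hpt \<Rightarrow> hpt) \<times> (spt \<Rightarrow> spt) \<Rightarrow> (hpt \<Rightarrow> hpt) \<times> (spt \<Rightarrow> spt)" where
  "iso_comp a b = (restrict (fst a \<circ> fst b) H3, snd a \<circ> snd b)"

definition iso_inv :: "(hpt \<Rightarrow> hpt) \<times> (spt \<Rightarrow> spt) \<Rightarrow> (hpt \<Rightarrow> hpt) \<times> (spt \<Rightarrow> spt)" where
  "iso_inv a = (restrict (inv_into H3 (fst a)) H3, inv (snd a))"

definition nice_lattice :: "((hpt \<Rightarrow> hpt) \<times> (spt \<Rightarrow> spt)) set \<Rightarrow> bool" where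
  "nice_lattice \<Gamma> \<longleftrightarrow>
     \<Gamma> \<subseteq> Isom \<and> iso_id \<in> \<Gamma> \<and>
     (\<forall>a\<in>\<Gamma>. \<forall>b\<in>\<Gamma>. iso_comp a b \<in> \<Gamma>) \<and> (\<forall>a\<in>\<Gamma>. iso_inv a \<in> \<Gamma>) \<and>
     \<comment> \<open>free action\<close>
     (\<forall>a\<in>\<Gamma>. \<forall>p\<in>H3. fst a p = p \<longrightarrow> a = iso_id) \<and>
     \<comment> \<open>properly discontinuous\<close>
     (\<forall>K. compact K \<and> K \<subseteq> H3 \<longrightarrow> finite {a\<in>\<Gamma>. fst a ` K \<inter> K \<noteq> {}}) \<and>
     \<comment> \<open>cocompact\<close>
     (\<exists>K. compact K \<and> K \<subseteq> H3 \<and> (\<Union>a\<in>\<Gamma>. fst a ` K) = H3)"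

definition bilipschitz_bij :: "(hpt \<Rightarrow> hpt) \<Rightarrow> bool" where
  "bilipschitz_bij F \<longleftrightarrow> bij_betw F H3 H3 \<and>
     (\<exists>L\<ge>1. \<forall>p\<in>H3. \<forall>q\<in>H3. hdist p q / L \<le> hdist (F p) (F q) \<and> hdist (F p) (F q) \<le> L * hdist p q)"

definition s_continuous :: "(spt \<Rightarrow> spt) \<Rightarrow> bool" where
  "s_continuous f \<longleftrightarrow> (\<forall>x. \<forall>e>0. \<exists>d>0. \<forall>y. sdist y x < d \<longrightarrow> sdist (f y) (f x) < e)"

definition s_homeomorphism :: "(spt \<Rightarrow> spt) \<Rightarrow> bool" where
  "s_homeomorphism f \<longleftrightarrow> bij f \<and> s_continuous f \<and> s_continuous (inv f)"

definition equivariant_pair :: "(hpt \<Rightarrow> hpt) \<Rightarrow> (spt \<Rightarrow> spt) \<Rightarrow> bool" where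
  "equivariant_pair F f \<longleftrightarrow>
     bilipschitz_bij F \<and> s_homeomorphism f \<and> bar_continuous F f \<and>
     (\<exists>\<Gamma>1 \<Gamma>2. nice_lattice \<Gamma>1 \<and> nice_lattice \<Gamma>2 \<and>
        (\<lambda>a. restrict (F \<circ> fst a \<circ> inv_into H3 F) H3) ` \<Gamma>1 = fst ` \<Gamma>2 \<and>
        (\<lambda>a. f \<circ> snd a \<circ> inv f) ` \<Gamma>1 = snd ` \<Gamma>2)"

definition derived_seq ::
  "(hpt \<Rightarrow> hpt) \<Rightarrow> (spt \<Rightarrow> spt) \<Rightarrow> (nat \<Rightarrow> hpt \<Rightarrow> hpt) \<Rightarrow> (nat \<Rightarrow> spt \<Rightarrow> spt) \<Rightarrow> bool" where
  "derived_seq F f Fs fs \<longleftrightarrow>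
     (\<exists>a b. (\<forall>n. a n \<in> Isom \<and> b n \<in> Isom) \<and>
        (\<forall>n. \<forall>p\<in>H3. Fs n p = fst (a n) (F (fst (b n) p))) \<and>
        (\<forall>n. fs n = snd (a n) \<circ> f \<circ> snd (b n)))"

definition tame_seq :: "(nat \<Rightarrow> hpt \<Rightarrow> hpt) \<Rightarrow> bool" where
  "tame_seq Fs \<longleftrightarrow> (\<forall>p\<in>H3. \<exists>q\<in>H3. \<exists>R. \<forall>n. hdist (Fs n p) q \<le> R)"

end

theory Submission
  imports Defs
begin

text \<open>
  Work in the Poincare ball, reached from the upper half space by the inversion \<open>phiH\<close>. There
  every isometry is a Moebius motion \<open>X \<mapsto> a \<oplus> R X\<close> with \<open>|a| < 1\<close> and \<open>R\<close> orthogonal,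
  extended continuously to the sphere, so the isometries moving the base point \<open>o\<close> a bounded
  distance have parameters \<open>(a, R)\<close> in a compact set. Cocompactness of \<open>\<Gamma>\<^sub>1\<close> together with
  \<open>F \<Gamma>\<^sub>1 F\<inverse> = \<Gamma>\<^sub>2\<close> lets us rewrite the derived sequence as \<open>a\<^sub>n F b\<^sub>n\<close> with \<open>b\<^sub>n o\<close> in a
  fixed compact set; tameness and the Lipschitz bound for \<open>F\<close> then keep \<open>a\<^sub>n o\<close> bounded as
  well. A subsequence of the parameters of \<open>a\<^sub>n\<close> and \<open>b\<^sub>n\<close> converges, and joint uniform
  continuity of Moebius motions in parameter and point gives uniform convergence on \<open>S\<close> (with
  uniform continuity of \<open>f\<close>) and, through the Lipschitz bound, locally uniform convergence on
  \<open>H3\<close>.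
\<close>

section \<open>Moebius addition and the Poincare ball\<close>

definition mobius_den :: "'a::real_inner \<Rightarrow> 'a \<Rightarrow> real" where
  "mobius_den a x = 1 + 2 * inner a x + (norm a)\<^sup>2 * (norm x)\<^sup>2"

text \<open>Moebius addition \<open>a \<oplus> x\<close>: for \<open>|a| < 1\<close>, \<open>x \<mapsto> a \<oplus> x\<close> is the hyperbolic isometry of
  the unit ball taking \<open>0\<close> to \<open>a\<close>.\<close>

definition mobius_add :: "'a::real_inner \<Rightarrow> 'a \<Rightarrow> 'a" where
  "mobius_add a x = (1 / mobius_den a x) *\<^sub>R
     ((1 + 2 * inner a x + (norm x)\<^sup>2) *\<^sub>R a + (1 - (norm a)\<^sup>2) *\<^sub>R x)"

lemma power2_norm_scaleR_add:
  fixes a x :: "'a::real_inner"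
  shows "(norm (c *\<^sub>R a + d *\<^sub>R x))\<^sup>2 = c\<^sup>2 * (norm a)\<^sup>2 + 2 * c * d * inner a x + d\<^sup>2 * (norm x)\<^sup>2"
  unfolding power2_norm_eq_inner
  by (simp add: inner_add_right inner_commute algebra_simps power2_eq_square)

lemma power2_norm_scaleR_add3:
  fixes a x y :: "'a::real_inner"
  shows "(norm (c *\<^sub>R a + d *\<^sub>R x + e *\<^sub>R y))\<^sup>2 =
    c\<^sup>2 * (norm a)\<^sup>2 + d\<^sup>2 * (norm x)\<^sup>2 + e\<^sup>2 * (norm y)\<^sup>2
    + 2 * c * d * inner a x + 2 * c * e * inner a y + 2 * d * e * inner x y"
  unfolding power2_norm_eq_inner
  by (simp add: inner_add_right inner_commute algebra_simps power2_eq_square)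

lemma norm_mobius_add:
  fixes a x :: "'a::real_inner"
  assumes "mobius_den a x \<noteq> 0"
  shows "(norm (mobius_add a x))\<^sup>2 = 1 - (1 - (norm a)\<^sup>2) * (1 - (norm x)\<^sup>2) / mobius_den a x"
  using assms
  unfolding mobius_add_def norm_scaleR power_mult_distrib power2_abs power2_norm_scaleR_add
  by (simp add: mobius_den_def field_simps) algebra

lemma mobius_add_eq:
  "mobius_add a x = ((1 + 2 * inner a x + (norm x)\<^sup>2) / mobius_den a x) *\<^sub>R a
     + ((1 - (norm a)\<^sup>2) / mobius_den a x) *\<^sub>R x"
  unfolding mobius_add_def by (simp add: scaleR_add_right)

lemma norm_mobius_add_diff:
  fixes a x y :: "'a::real_inner"
  assumes "mobius_den a x \<noteq> 0" "mobius_den a y \<noteq> 0"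
  shows "(norm (mobius_add a x - mobius_add a y))\<^sup>2
    = (1 - (norm a)\<^sup>2)\<^sup>2 * (norm (x - y))\<^sup>2 / (mobius_den a x * mobius_den a y)"
proof -
  define dx dy where "dx = mobius_den a x" "dy = mobius_den a y"
  define px py where "px = 1 + 2 * inner a x + (norm x)\<^sup>2" "py = 1 + 2 * inner a y + (norm y)\<^sup>2"
  define q where "q = 1 - (norm a)\<^sup>2"
  have "mobius_add a x - mobius_add a y
      = (px / dx - py / dy) *\<^sub>R a + (q / dx) *\<^sub>R x + (- (q / dy)) *\<^sub>R y"
    unfolding mobius_add_eq dx_dy_def px_py_def q_def by (simp add: algebra_simps)
  then have "(norm (mobius_add a x - mobius_add a y))\<^sup>2 =
    (px / dx - py / dy)\<^sup>2 * (norm a)\<^sup>2 + (q / dx)\<^sup>2 * (norm x)\<^sup>2 + (- (q / dy))\<^sup>2 * (norm y)\<^sup>2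
    + 2 * (px / dx - py / dy) * (q / dx) * inner a x
    + 2 * (px / dx - py / dy) * (- (q / dy)) * inner a y
    + 2 * (q / dx) * (- (q / dy)) * inner x y"
    by (simp only: power2_norm_scaleR_add3)
  also have "\<dots> = ((px * dy - py * dx)\<^sup>2 * (norm a)\<^sup>2 + (q * dy)\<^sup>2 * (norm x)\<^sup>2 + (q * dx)\<^sup>2 * (norm y)\<^sup>2
    + 2 * (px * dy - py * dx) * (q * dy) * inner a x - 2 * (px * dy - py * dx) * (q * dx) * inner a y
    - 2 * (q * dy) * (q * dx) * inner x y) / (dx * dy)\<^sup>2"
    using assms unfolding dx_dy_def[symmetric] by (simp add: field_simps power2_eq_square)
  also have "(px * dy - py * dx)\<^sup>2 * (norm a)\<^sup>2 + (q * dy)\<^sup>2 * (norm x)\<^sup>2 + (q * dx)\<^sup>2 * (norm y)\<^sup>2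
    + 2 * (px * dy - py * dx) * (q * dy) * inner a x - 2 * (px * dy - py * dx) * (q * dx) * inner a y
    - 2 * (q * dy) * (q * dx) * inner x y
    = q\<^sup>2 * ((norm x)\<^sup>2 + (norm y)\<^sup>2 - 2 * inner x y) * (dx * dy)"
    unfolding dx_dy_def px_py_def q_def mobius_den_def by algebra
  also have "(norm x)\<^sup>2 + (norm y)\<^sup>2 - 2 * inner x y = (norm (x - y))\<^sup>2"
    unfolding power2_norm_eq_inner by (simp add: inner_diff_left inner_diff_right inner_commute)
  finally show ?thesis
    using assms unfolding dx_dy_def[symmetric] q_def by (simp add: power2_eq_square)
qed

lemma mobius_den_pos:
  fixes a x :: "'a::real_inner"
  assumes "norm a < 1" "norm x \<le> 1"
  shows "mobius_den a x > 0"
proof -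
  have "norm a * norm x < 1"
    using assms mult_left_le[of "norm x" "norm a"] by simp
  moreover have "\<bar>inner a x\<bar> \<le> norm a * norm x" by (rule Cauchy_Schwarz_ineq2)
  ultimately have "mobius_den a x \<ge> (1 - norm a * norm x)\<^sup>2"
    unfolding mobius_den_def by (auto simp: power2_eq_square algebra_simps abs_le_iff)
  moreover have "(1 - norm a * norm x)\<^sup>2 > 0" using \<open>norm a * norm x < 1\<close> by simp
  ultimately show ?thesis by linarith
qed

lemma mobius_add_left_cancel:
  fixes a x :: "'a::real_inner"
  assumes "mobius_den a x \<noteq> 0" "norm a \<noteq> 1"
  shows "mobius_add (-a) (mobius_add a x) = x"
proof -
  define d p q where "d = mobius_den a x" "p = 1 + 2 * inner a x + (norm x)\<^sup>2" "q = 1 - (norm a)\<^sup>2"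
  define y where "y = mobius_add a x"
  have d: "d \<noteq> 0" using assms(1) unfolding d_p_q_def .
  have q: "q \<noteq> 0"
    using assms(2) unfolding d_p_q_def by (simp add: abs_square_eq_1)
  have y: "y = (p / d) *\<^sub>R a + (q / d) *\<^sub>R x" unfolding y_def d_p_q_def by (rule mobius_add_eq)
  have ay: "inner a y = (p / d) * (norm a)\<^sup>2 + (q / d) * inner a x"
    unfolding y by (simp add: inner_add_right power2_norm_eq_inner)
  have ny: "(norm y)\<^sup>2 = 1 - q * (1 - (norm x)\<^sup>2) / d"
    unfolding y_def d_p_q_def by (rule norm_mobius_add[OF assms(1)])
  have "d - 2 * (p * (norm a)\<^sup>2 + q * inner a x) + (norm a)\<^sup>2 * (d - q * (1 - (norm x)\<^sup>2)) = q\<^sup>2"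
    "d - 2 * (p * (norm a)\<^sup>2 + q * inner a x) + (d - q * (1 - (norm x)\<^sup>2)) = q * p"
    unfolding d_p_q_def mobius_den_def by algebra+
  moreover have "mobius_den (-a) y
      = (d - 2 * (p * (norm a)\<^sup>2 + q * inner a x) + (norm a)\<^sup>2 * (d - q * (1 - (norm x)\<^sup>2))) / d"
    "1 + 2 * inner (-a) y + (norm y)\<^sup>2 = (d - 2 * (p * (norm a)\<^sup>2 + q * inner a x) + (d - q * (1 - (norm x)\<^sup>2))) / d"
    unfolding mobius_den_def inner_minus_left ay ny using d by (simp_all add: field_simps)
  ultimately have den: "mobius_den (-a) y = q\<^sup>2 / d" and num: "1 + 2 * inner (-a) y + (norm y)\<^sup>2 = q * p / d"
    by simp_all
  have "mobius_add (-a) y = ((q * p / d) / (q\<^sup>2 / d)) *\<^sub>R (-a) + (q / (q\<^sup>2 / d)) *\<^sub>R y"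
    unfolding mobius_add_eq[of "-a" y] den num by (simp add: d_p_q_def)
  also have "\<dots> = x"
    unfolding y using d q by (simp add: field_simps power2_eq_square scaleR_add_right)
  finally show ?thesis unfolding y_def .
qed

lemma mobius_add_0_right [simp]: "mobius_add a 0 = a"
  unfolding mobius_add_def mobius_den_def by simp

lemma mobius_add_neg_self: "mobius_add (-a) a = (0::'a::real_inner)"
  unfolding mobius_add_def mobius_den_def by (simp add: power2_norm_eq_inner algebra_simps)

lemma mobius_add_cancel_ball [simp]:
  fixes a x :: "'a::real_inner"
  assumes "norm a < 1" "norm x \<le> 1"
  shows "mobius_add (-a) (mobius_add a x) = x" "mobius_add a (mobius_add (-a) x) = x"
  using mobius_add_left_cancel[of a x] mobius_add_left_cancel[of "-a" x] mobius_den_pos[of a x]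
    mobius_den_pos[of "-a" x] assms by auto

lemma norm_mobius_add_less:
  fixes a x :: "'a::real_inner"
  assumes "norm a < 1" "norm x < 1"
  shows "norm (mobius_add a x) < 1"
proof -
  have d: "mobius_den a x > 0" using mobius_den_pos assms by fastforce
  have "(1 - (norm a)\<^sup>2) * (1 - (norm x)\<^sup>2) / mobius_den a x > 0"
    using assms d by (intro divide_pos_pos mult_pos_pos) (auto simp: abs_square_less_1)
  then have "(norm (mobius_add a x))\<^sup>2 < 1" using norm_mobius_add[of a x] d by simp
  then show ?thesis by (simp add: abs_square_less_1)
qed

lemma norm_mobius_add_eq_1:
  fixes a x :: "'a::real_inner"
  assumes "norm a < 1" "norm x = 1"
  shows "norm (mobius_add a x) = 1"
proof -
  have "mobius_den a x > 0" using mobius_den_pos[of a x] assms by simp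
  then have "(norm (mobius_add a x))\<^sup>2 = 1" using norm_mobius_add[of a x] assms by simp
  then show ?thesis by (simp add: abs_square_eq_1)
qed

lemma continuous_on_mobius_add:
  "continuous_on {z::'a::real_inner \<times> 'a. norm (fst z) < 1 \<and> norm (snd z) \<le> 1}
     (\<lambda>z. mobius_add (fst z) (snd z))"
  unfolding mobius_add_def mobius_den_def
  by (intro continuous_intros) (auto dest!: mobius_den_pos simp: mobius_den_def)

definition ball_dist :: "'a::real_inner \<Rightarrow> 'a \<Rightarrow> real" where
  "ball_dist X Y = arcosh (1 + 2 * (norm (X - Y))\<^sup>2 / ((1 - (norm X)\<^sup>2) * (1 - (norm Y)\<^sup>2)))"

lemma ball_dist_arg_ge_1:
  fixes X Y :: "'a::real_inner"
  assumes "norm X < 1" "norm Y < 1"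
  shows "1 \<le> 1 + 2 * (norm (X - Y))\<^sup>2 / ((1 - (norm X)\<^sup>2) * (1 - (norm Y)\<^sup>2))"
  using assms by (intro add_increasing2 divide_nonneg_pos) (auto simp: abs_square_less_1)

lemma cosh_ball_dist:
  fixes X Y :: "'a::real_inner"
  assumes "norm X < 1" "norm Y < 1"
  shows "cosh (ball_dist X Y) = 1 + 2 * (norm (X - Y))\<^sup>2 / ((1 - (norm X)\<^sup>2) * (1 - (norm Y)\<^sup>2))"
  unfolding ball_dist_def using ball_dist_arg_ge_1[OF assms] by simp

lemma ball_dist_nonneg: "norm X < 1 \<Longrightarrow> norm Y < 1 \<Longrightarrow> ball_dist X Y \<ge> 0"
  unfolding ball_dist_def by (rule arcosh_nonneg_real[OF ball_dist_arg_ge_1])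

lemma ball_dist_commute: "ball_dist X Y = ball_dist Y X"
  unfolding ball_dist_def by (simp add: norm_minus_commute mult.commute)

lemma ball_dist_self [simp]: "ball_dist X X = 0"
  unfolding ball_dist_def by simp

lemma ball_dist_mobius_add:
  fixes a X Y :: "'a::real_inner"
  assumes "norm a < 1" "norm X < 1" "norm Y < 1"
  shows "ball_dist (mobius_add a X) (mobius_add a Y) = ball_dist X Y"
proof -
  have dX: "mobius_den a X > 0" and dY: "mobius_den a Y > 0"
    using mobius_den_pos assms by fastforce+
  have cancel: "2 * (q\<^sup>2 * n / (dx * dy)) / ((q * x / dx) * (q * y / dy)) = 2 * n / (x * y)"
    if "q \<noteq> 0" "x \<noteq> 0" "y \<noteq> 0" "dx \<noteq> 0" "dy \<noteq> 0" for q n x y dx dy :: real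
    using that by (simp add: field_simps power2_eq_square)
  have "1 - (norm a)\<^sup>2 > 0" "1 - (norm X)\<^sup>2 > 0" "1 - (norm Y)\<^sup>2 > 0"
    using assms by (auto simp: abs_square_less_1)
  then have "2 * ((1 - (norm a)\<^sup>2)\<^sup>2 * (norm (X - Y))\<^sup>2 / (mobius_den a X * mobius_den a Y))
      / (((1 - (norm a)\<^sup>2) * (1 - (norm X)\<^sup>2) / mobius_den a X)
         * ((1 - (norm a)\<^sup>2) * (1 - (norm Y)\<^sup>2) / mobius_den a Y))
    = 2 * (norm (X - Y))\<^sup>2 / ((1 - (norm X)\<^sup>2) * (1 - (norm Y)\<^sup>2))"
    using dX dY by (intro cancel) auto
  then show ?thesis
    unfolding ball_dist_def using norm_mobius_add_diff[of a X Y] norm_mobius_add[of a X]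
      norm_mobius_add[of a Y] dX dY by simp
qed

lemma continuous_on_ball_dist:
  "continuous_on {z::'a::real_inner \<times> 'a. norm (fst z) < 1 \<and> norm (snd z) < 1}
     (\<lambda>z. ball_dist (fst z) (snd z))"
proof -
  define S where "S = {z::'a \<times> 'a. norm (fst z) < 1 \<and> norm (snd z) < 1}"
  have "continuous_on S (\<lambda>z. 1 + 2 * (norm (fst z - snd z))\<^sup>2 / ((1 - (norm (fst z))\<^sup>2) * (1 - (norm (snd z))\<^sup>2)))"
    by (intro continuous_intros) (auto simp: S_def abs_square_eq_1)
  then have "continuous_on S (\<lambda>z. arcosh (1 + 2 * (norm (fst z - snd z))\<^sup>2
                                         / ((1 - (norm (fst z))\<^sup>2) * (1 - (norm (snd z))\<^sup>2))))"
    by (rule continuous_on_compose2[OF continuous_on_arcosh[OF order_refl]])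
      (use ball_dist_arg_ge_1 in \<open>auto simp: S_def\<close>)
  then show ?thesis unfolding ball_dist_def S_def .
qed

lemma ball_dist_eq_imp_arg_eq:
  fixes A B C D :: "'a::real_inner"
  assumes "norm A < 1" "norm B < 1" "norm C < 1" "norm D < 1" "ball_dist A B = ball_dist C D"
  shows "(norm (A - B))\<^sup>2 / ((1 - (norm A)\<^sup>2) * (1 - (norm B)\<^sup>2))
       = (norm (C - D))\<^sup>2 / ((1 - (norm C)\<^sup>2) * (1 - (norm D)\<^sup>2))"
  using arg_cong[OF assms(5), of cosh] cosh_ball_dist[OF assms(1,2)] cosh_ball_dist[OF assms(3,4)]
  by simp

lemma ball_isometry_fixing_0_inner:
  fixes N :: "'a::real_inner \<Rightarrow> 'a"
  assumes ball: "\<And>X. norm X < 1 \<Longrightarrow> norm (N X) < 1"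
    and dist: "\<And>X Y. norm X < 1 \<Longrightarrow> norm Y < 1 \<Longrightarrow> ball_dist (N X) (N Y) = ball_dist X Y"
    and zero: "N 0 = 0"
    and X: "norm X < 1" and Y: "norm Y < 1"
  shows "inner (N X) (N Y) = inner X Y"
proof -
  have norm_N: "norm (N Z) = norm Z" if Z: "norm Z < 1" for Z
  proof -
    have "(norm (N Z))\<^sup>2 / (1 - (norm (N Z))\<^sup>2) = (norm Z)\<^sup>2 / (1 - (norm Z)\<^sup>2)"
      using ball_dist_eq_imp_arg_eq[of "N Z" 0 Z 0] ball[OF Z] Z dist[OF Z, of 0] zero by simp
    moreover have "1 - (norm (N Z))\<^sup>2 > 0" "1 - (norm Z)\<^sup>2 > 0"
      using ball[OF Z] Z by (auto simp: abs_square_less_1)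
    ultimately have "(norm (N Z))\<^sup>2 = (norm Z)\<^sup>2" by (simp add: field_simps)
    then show ?thesis by (simp add: power2_eq_iff_nonneg)
  qed
  have "(1 - (norm X)\<^sup>2) * (1 - (norm Y)\<^sup>2) > 0" using X Y by (auto simp: abs_square_less_1)
  then have "(norm (N X - N Y))\<^sup>2 = (norm (X - Y))\<^sup>2"
    using ball_dist_eq_imp_arg_eq[of "N X" "N Y" X Y] ball X Y dist norm_N
    by (simp add: abs_square_eq_1)
  moreover have "inner (N Z) (N Z) = inner Z Z" if "norm Z < 1" for Z
    using norm_N[OF that] by (metis power2_norm_eq_inner)
  ultimately show ?thesis
    using X Y unfolding power2_norm_eq_inner by (simp add: inner_diff_left inner_diff_right inner_commute)
qed

lemma dist_less_if_ball_dist_less: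
  fixes X Y :: "'a::real_inner"
  assumes X: "norm X < 1" and Y: "norm Y < 1" and e: "e > 0" and h: "ball_dist X Y < arcosh (1 + e\<^sup>2)"
  shows "dist X Y < e"
proof -
  have "cosh (ball_dist X Y) < cosh (arcosh (1 + e\<^sup>2))"
    using h ball_dist_nonneg[OF X Y] by (subst cosh_real_nonneg_less_iff) auto
  then have c: "2 * (norm (X - Y))\<^sup>2 / ((1 - (norm X)\<^sup>2) * (1 - (norm Y)\<^sup>2)) < e\<^sup>2"
    using cosh_ball_dist[OF X Y] by simp
  define D where "D = (1 - (norm X)\<^sup>2) * (1 - (norm Y)\<^sup>2)"
  have D: "D > 0" "D \<le> 1"
    using X Y unfolding D_def by (auto simp: abs_square_less_1 abs_square_le_1 intro!: mult_le_one)
  then have "(norm (X - Y))\<^sup>2 * D \<le> 2 * (norm (X - Y))\<^sup>2"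
    using mult_left_le[of D "(norm (X - Y))\<^sup>2"] zero_le_power2[of "norm (X - Y)"] by linarith
  then have "(norm (X - Y))\<^sup>2 \<le> 2 * (norm (X - Y))\<^sup>2 / D" using D(1) by (simp add: le_divide_eq)
  then have "(norm (X - Y))\<^sup>2 < e\<^sup>2" using c unfolding D_def by linarith
  then show ?thesis unfolding dist_norm using e by (simp add: power2_less_imp_less)
qed

lemma compact_in_ball_norm_bound:
  fixes S :: "'a::real_normed_vector set"
  assumes "compact S" "S \<subseteq> ball 0 1"
  obtains r where "r < 1" "\<And>X. X \<in> S \<Longrightarrow> norm X \<le> r"
proof (cases "S = {}")
  case False
  have "compact (norm ` S)" by (intro compact_continuous_image continuous_intros assms(1))
  then obtain s where "s \<in> norm ` S" "\<forall>t\<in>norm ` S. t \<le> s"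
    using compact_attains_sup[of "norm ` S"] False by blast
  with assms(2) that show ?thesis by auto
qed (use that[of 0] in auto)

type_synonym v3 = "complex \<times> real"

text \<open>An orthogonal map of \<open>\<complex> \<times> \<real>\<close> is represented by the images of the standard basis.\<close>

definition frame_apply :: "v3 \<times> v3 \<times> v3 \<Rightarrow> v3 \<Rightarrow> v3" where
  "frame_apply F X = Re (fst X) *\<^sub>R fst F + Im (fst X) *\<^sub>R fst (snd F) + snd X *\<^sub>R snd (snd F)"

definition orthonormal_frame :: "v3 \<times> v3 \<times> v3 \<Rightarrow> bool" where
  "orthonormal_frame F \<longleftrightarrow>
     inner (fst F) (fst F) = 1 \<and> inner (fst (snd F)) (fst (snd F)) = 1 \<and>
     inner (snd (snd F)) (snd (snd F)) = 1 \<and> inner (fst F) (fst (snd F)) = 0 \<and>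
     inner (fst F) (snd (snd F)) = 0 \<and> inner (fst (snd F)) (snd (snd F)) = 0"

lemma inner_v3: "inner (X::v3) Y = Re (fst X) * Re (fst Y) + Im (fst X) * Im (fst Y) + snd X * snd Y"
  by (cases X; cases Y) (simp add: inner_complex_def)

lemma inner_frame_apply:
  "orthonormal_frame F \<Longrightarrow> inner (frame_apply F X) (frame_apply F Y) = inner X Y"
  unfolding frame_apply_def orthonormal_frame_def inner_v3[of X Y]
  by (simp add: inner_add_left inner_add_right inner_commute algebra_simps)

lemma norm_frame_apply: "orthonormal_frame F \<Longrightarrow> norm (frame_apply F X) = norm X"
  using inner_frame_apply[of F X X] by (simp add: norm_eq_sqrt_inner)

lemma linear_frame_apply: "linear (frame_apply F)"
  unfolding frame_apply_def by (intro linearI) (auto simp: algebra_simps)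

lemma norm_frame_apply_diff:
  "orthonormal_frame F \<Longrightarrow> norm (frame_apply F X - frame_apply F Y) = norm (X - Y)"
  by (simp add: linear_diff[OF linear_frame_apply, symmetric] norm_frame_apply)

lemma bij_frame_apply: "orthonormal_frame F \<Longrightarrow> bij (frame_apply F)"
proof -
  assume F: "orthonormal_frame F"
  then have "inj (frame_apply F)"
    by (intro injI) (metis norm_frame_apply_diff eq_iff_diff_eq_0 norm_eq_zero)
  then show ?thesis
    using eucl.linear_inj_imp_surj[OF linear_frame_apply] by (simp add: bij_def)
qed

lemma frame_apply_0 [simp]: "frame_apply F 0 = 0"
  unfolding frame_apply_def by simp

lemma compact_orthonormal_frames: "compact {F. orthonormal_frame F}"
proof -
  have "closed {F. orthonormal_frame F}"
    unfolding orthonormal_frame_def Collect_conj_eq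
    by (intro closed_Int closed_Collect_eq continuous_intros)
  moreover have "{F. orthonormal_frame F} \<subseteq> cball 0 3"
  proof
    fix F :: "v3 \<times> v3 \<times> v3"
    assume "F \<in> {F. orthonormal_frame F}"
    then have "norm (fst F) = 1" "norm (fst (snd F)) = 1" "norm (snd (snd F)) = 1"
      unfolding orthonormal_frame_def by (auto simp: norm_eq_sqrt_inner)
    moreover have "norm F \<le> norm (fst F) + norm (snd F)"
      "norm (snd F) \<le> norm (fst (snd F)) + norm (snd (snd F))"
      using norm_Pair_le[of "fst F" "snd F"] norm_Pair_le[of "fst (snd F)" "snd (snd F)"] by auto
    ultimately show "F \<in> cball 0 3" by auto
  qed
  ultimately show ?thesis
    by (metis bounded_cball bounded_subset compact_eq_bounded_closed)
qed

lemma ball_isometry_fixing_0_eq_frame: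
  fixes N :: "v3 \<Rightarrow> v3"
  assumes ball: "\<And>X. norm X < 1 \<Longrightarrow> norm (N X) < 1"
    and dist: "\<And>X Y. norm X < 1 \<Longrightarrow> norm Y < 1 \<Longrightarrow> ball_dist (N X) (N Y) = ball_dist X Y"
    and zero: "N 0 = 0"
  obtains F where "orthonormal_frame F" "\<And>X. norm X < 1 \<Longrightarrow> N X = frame_apply F X"
proof -
  have inner_N: "inner (N X) (N Y) = inner X Y" if "norm X < 1" "norm Y < 1" for X Y
    using ball_isometry_fixing_0_inner[of N X Y] ball dist zero that by blast
  define e1 e2 e3 :: v3 where "e1 = (1/2, 0)" "e2 = (\<i>/2, 0)" "e3 = (0, 1/2)"
  have e: "norm e1 < 1" "norm e2 < 1" "norm e3 < 1" unfolding e1_e2_e3_def by (auto simp: norm_Pair)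
  define F where "F = (2 *\<^sub>R N e1, 2 *\<^sub>R N e2, 2 *\<^sub>R N e3)"
  have "inner (2 *\<^sub>R N u) (2 *\<^sub>R N v) = 4 * inner u v" if "norm u < 1" "norm v < 1" for u v
    using inner_N[OF that] by simp
  then have F: "orthonormal_frame F"
    unfolding orthonormal_frame_def F_def using e unfolding e1_e2_e3_def by (simp add: inner_v3)
  have "N X = frame_apply F X" if X: "norm X < 1" for X
  proof -
    have "inner (N X) (2 *\<^sub>R N e1) = Re (fst X)" "inner (N X) (2 *\<^sub>R N e2) = Im (fst X)"
      "inner (N X) (2 *\<^sub>R N e3) = snd X"
      using inner_N[OF X e(1)] inner_N[OF X e(2)] inner_N[OF X e(3)]
      unfolding e1_e2_e3_def by (simp_all add: inner_v3)
    then have "inner (N X) (frame_apply F X) = (Re (fst X))\<^sup>2 + (Im (fst X))\<^sup>2 + (snd X)\<^sup>2"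
      unfolding frame_apply_def F_def
      by (simp only: inner_add_right inner_scaleR_right fst_conv snd_conv) (simp add: power2_eq_square)
    also have "\<dots> = inner X X" unfolding inner_v3[of X X] by (simp add: power2_eq_square)
    finally have "inner (N X - frame_apply F X) (N X - frame_apply F X) = 0"
      using inner_N[OF X X] inner_frame_apply[OF F, of X X]
      by (simp add: inner_diff_left inner_diff_right inner_commute)
    then show ?thesis by simp
  qed
  with F that show ?thesis by blast
qed

lemma ball_dist_small_if_dist_small:
  fixes r e :: real
  assumes "r < 1" "e > 0"
  obtains d where "d > 0"
    "\<And>X Y::v3. norm X \<le> r \<Longrightarrow> dist X Y < d \<Longrightarrow> norm Y < 1 \<and> ball_dist X Y < e"
proof -
  define r' where "r' = (1 + r) / 2"
  have r': "r' < 1" "r < r'" unfolding r'_def using assms(1) by auto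
  have uc: "uniformly_continuous_on (cball 0 r' \<times> cball 0 r') (\<lambda>z::v3 \<times> v3. ball_dist (fst z) (snd z))"
    using r' by (intro compact_uniformly_continuous compact_Times compact_cball
        continuous_on_subset[OF continuous_on_ball_dist]) auto
  obtain d where d: "d > 0" "\<forall>z\<in>cball (0::v3) r' \<times> cball 0 r'. \<forall>z'\<in>cball 0 r' \<times> cball 0 r'.
      dist z' z < d \<longrightarrow> dist (ball_dist (fst z') (snd z')) (ball_dist (fst z) (snd z)) < e"
    using uc[unfolded uniformly_continuous_on_def, rule_format, OF assms(2)] by blast
  show ?thesis
  proof
    show "min d (r' - r) > 0" using d(1) r' by simp
    fix X Y :: v3 assume X: "norm X \<le> r" and XY: "dist X Y < min d (r' - r)"
    have Y: "norm Y \<le> r'" using X XY norm_triangle_ineq2[of Y X] by (simp add: dist_norm norm_minus_commute)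
    have "dist (X, Y) (X, X) < d" using XY by (simp add: dist_Pair_Pair dist_commute)
    then have "dist (ball_dist X Y) (ball_dist X X) < e"
      using d(2)[rule_format, of "(X, X)" "(X, Y)"] X Y r' by auto
    then show "norm Y < 1 \<and> ball_dist X Y < e" using Y r' by (simp add: dist_real_def)
  qed
qed

lemma ball_dist_bounded:
  assumes "r < 1" "norm Y < 1"
  obtains R where "\<And>X::v3. norm X \<le> r \<Longrightarrow> ball_dist X Y \<le> R"
proof -
  have "continuous_on (cball 0 r) (\<lambda>X. ball_dist (fst (X, Y)) (snd (X, Y)))"
    by (rule continuous_on_compose2[OF continuous_on_ball_dist])
      (use assms in \<open>auto intro!: continuous_intros\<close>)
  then have "compact ((\<lambda>X. ball_dist X Y) ` cball 0 r)"
    by (intro compact_continuous_image compact_cball) simp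
  then obtain R where "\<forall>t\<in>(\<lambda>X. ball_dist X Y) ` cball 0 r. \<bar>t\<bar> \<le> R"
    using compact_imp_bounded bounded_real by blast
  then show ?thesis by (auto intro!: that[of R] simp: abs_le_iff)
qed

lemma norm_bounded_if_ball_dist_bounded:
  fixes r R :: real
  assumes r: "r < 1"
  obtains r' where "r' < 1" "\<And>X Y::v3. norm X < 1 \<Longrightarrow> norm Y \<le> r \<Longrightarrow> ball_dist X Y \<le> R \<Longrightarrow> norm X \<le> r'"
proof -
  define C where "C = cosh (max R 0)"
  have C: "C \<ge> 1" unfolding C_def by (rule cosh_real_ge_1)
  define \<rho> where "\<rho> = sqrt ((C - 1) / (C + 1))"
  have \<rho>: "\<rho> < 1" unfolding \<rho>_def using C by simp
  have cpt: "compact ((\<lambda>z. mobius_add (fst z) (snd z)) ` (cball 0 r \<times> cball (0::v3) \<rho>))"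
    by (intro compact_continuous_image compact_Times compact_cball
        continuous_on_subset[OF continuous_on_mobius_add]) (use r \<rho> in auto)
  have sub: "(\<lambda>z. mobius_add (fst z) (snd z)) ` (cball 0 r \<times> cball (0::v3) \<rho>) \<subseteq> ball 0 1"
    using r \<rho> by (auto intro!: norm_mobius_add_less)
  obtain r' where r': "r' < 1"
    "\<And>W. W \<in> (\<lambda>z. mobius_add (fst z) (snd z)) ` (cball 0 r \<times> cball (0::v3) \<rho>) \<Longrightarrow> norm W \<le> r'"
    using compact_in_ball_norm_bound[OF cpt sub] by blast
  show ?thesis
  proof (rule that[OF r'(1)])
    fix X Y :: v3 assume X: "norm X < 1" and Y: "norm Y \<le> r" and h: "ball_dist X Y \<le> R"
    have Y1: "norm Y < 1" using Y r by simp
    define Z where "Z = mobius_add (-Y) X"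
    have Z: "norm Z < 1" unfolding Z_def using X Y1 by (intro norm_mobius_add_less) auto
    have "ball_dist Z 0 = ball_dist X Y"
      unfolding Z_def using ball_dist_mobius_add[of "-Y" X Y] X Y1 mobius_add_neg_self[of Y] by simp
    then have "cosh (ball_dist Z 0) \<le> C"
      unfolding C_def using h ball_dist_nonneg[OF Z, of 0] by (subst cosh_real_nonneg_le_iff) auto
    then have "2 * (norm Z)\<^sup>2 / (1 - (norm Z)\<^sup>2) \<le> C - 1" using cosh_ball_dist[OF Z, of 0] by simp
    moreover have "1 - (norm Z)\<^sup>2 > 0" using Z by (simp add: abs_square_less_1)
    ultimately have "2 * (norm Z)\<^sup>2 \<le> (C - 1) * (1 - (norm Z)\<^sup>2)" by (simp add: divide_le_eq)
    then have "(norm Z)\<^sup>2 * (C + 1) \<le> C - 1" by (simp add: algebra_simps)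
    then have "norm Z \<le> \<rho>" unfolding \<rho>_def using C by (simp add: real_le_rsqrt le_divide_eq)
    moreover have "mobius_add Y Z = X" unfolding Z_def using Y1 X by simp
    ultimately show "norm X \<le> r'" using r'(2)[of X] Y by force
  qed
qed

section \<open>The ball model of H3 and S\<close>

definition sphere_inversion :: "'a::real_inner \<Rightarrow> real \<Rightarrow> 'a \<Rightarrow> 'a" where
  "sphere_inversion c r p = c + (r / (norm (p - c))\<^sup>2) *\<^sub>R (p - c)"

lemma sphere_inversion_involution:
  fixes c p :: "'a::real_inner"
  assumes "p \<noteq> c" "r \<noteq> 0"
  shows "sphere_inversion c r (sphere_inversion c r p) = p"
proof -
  have A: "(norm (p - c))\<^sup>2 > 0" using assms by simp
  have "(norm ((r / (norm (p - c))\<^sup>2) *\<^sub>R (p - c)))\<^sup>2 = r\<^sup>2 / (norm (p - c))\<^sup>2"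
    using A by (simp add: power_mult_distrib power2_eq_square)
  then have "(r / (norm ((r / (norm (p - c))\<^sup>2) *\<^sub>R (p - c)))\<^sup>2) * (r / (norm (p - c))\<^sup>2) = 1"
    using A assms by (simp add: field_simps power2_eq_square)
  then show ?thesis unfolding sphere_inversion_def by (simp add: scaleR_scaleR)
qed

lemma norm_sphere_inversion_diff:
  fixes c p q :: "'a::real_inner"
  assumes "p \<noteq> c" "q \<noteq> c"
  shows "(norm (sphere_inversion c r p - sphere_inversion c r q))\<^sup>2
      = r\<^sup>2 * (norm (p - q))\<^sup>2 / ((norm (p - c))\<^sup>2 * (norm (q - c))\<^sup>2)"
proof -
  define u v where "u = p - c" "v = q - c"
  have A: "u \<noteq> 0" "v \<noteq> 0" using assms unfolding u_v_def by auto
  have "sphere_inversion c r p - sphere_inversion c r q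
      = (r / (norm u)\<^sup>2) *\<^sub>R u + (- (r / (norm v)\<^sup>2)) *\<^sub>R v"
    unfolding sphere_inversion_def u_v_def by simp
  then have "(norm (sphere_inversion c r p - sphere_inversion c r q))\<^sup>2
      = (r / (norm u)\<^sup>2)\<^sup>2 * (norm u)\<^sup>2 + 2 * (r / (norm u)\<^sup>2) * (- (r / (norm v)\<^sup>2)) * inner u v
        + (- (r / (norm v)\<^sup>2))\<^sup>2 * (norm v)\<^sup>2"
    by (simp only: power2_norm_scaleR_add)
  also have "\<dots> = r\<^sup>2 * ((norm u)\<^sup>2 + (norm v)\<^sup>2 - 2 * inner u v) / ((norm u)\<^sup>2 * (norm v)\<^sup>2)"
    using A by (simp add: field_simps power2_eq_square)
  also have "(norm u)\<^sup>2 + (norm v)\<^sup>2 - 2 * inner u v = (norm (p - q))\<^sup>2"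
    unfolding u_v_def power2_norm_eq_inner by (simp add: inner_diff_left inner_diff_right inner_commute)
  finally show ?thesis unfolding u_v_def .
qed

definition south_pole :: v3 where "south_pole = (0, -1)"

lemma norm_v3_sq: "(norm (p::v3))\<^sup>2 = (cmod (fst p))\<^sup>2 + (snd p)\<^sup>2"
  by (cases p) (simp add: norm_Pair)

lemma phiH_eq_sphere_inversion: "phiH = sphere_inversion south_pole 2"
proof
  fix p :: v3
  have "(norm (p - south_pole))\<^sup>2 = (cmod (fst p))\<^sup>2 + (snd p + 1)\<^sup>2"
    unfolding norm_v3_sq south_pole_def by simp
  then show "phiH p = sphere_inversion south_pole 2 p"
    unfolding phiH_def sphere_inversion_def south_pole_def Let_def
    by (cases p) (simp add: scaleR_conv_of_real)
qed

lemma phiH_phiH [simp]: "p \<noteq> south_pole \<Longrightarrow> phiH (phiH p) = p"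
  unfolding phiH_eq_sphere_inversion by (rule sphere_inversion_involution) auto

lemma norm_phiH:
  assumes "p \<noteq> south_pole"
  shows "(norm (phiH p))\<^sup>2 = 1 - 4 * snd p / (norm (p - south_pole))\<^sup>2"
proof -
  have A: "(norm (p - south_pole))\<^sup>2 > 0" using assms by simp
  have "(norm (phiH p))\<^sup>2 = (norm (1 *\<^sub>R south_pole + (2 / (norm (p - south_pole))\<^sup>2) *\<^sub>R (p - south_pole)))\<^sup>2"
    unfolding phiH_eq_sphere_inversion sphere_inversion_def by simp
  also have "\<dots> = 1 + 2 * (2 / (norm (p - south_pole))\<^sup>2) * inner south_pole (p - south_pole)
      + (2 / (norm (p - south_pole))\<^sup>2)\<^sup>2 * (norm (p - south_pole))\<^sup>2"
    by (simp only: power2_norm_scaleR_add) (simp add: south_pole_def)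
  also have "inner south_pole (p - south_pole) = - snd p - 1"
    unfolding south_pole_def by (cases p) (simp add: inner_Pair)
  finally show ?thesis using A by (simp add: field_simps power2_eq_square)
qed

lemma H3_ne_south_pole: "p \<in> H3 \<Longrightarrow> p \<noteq> south_pole"
  unfolding H3_def south_pole_def by auto

lemma ball_ne_south_pole: "norm X < 1 \<Longrightarrow> X \<noteq> south_pole"
  unfolding south_pole_def by (auto simp: norm_Pair)

lemma norm_phiH_less_1: "p \<in> H3 \<Longrightarrow> norm (phiH p) < 1"
proof -
  assume p: "p \<in> H3"
  then have "4 * snd p / (norm (p - south_pole))\<^sup>2 > 0"
    using H3_ne_south_pole[OF p] unfolding H3_def by simp
  then have "(norm (phiH p))\<^sup>2 < 1" using norm_phiH[OF H3_ne_south_pole[OF p]] by simp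
  then show ?thesis by (simp add: abs_square_less_1)
qed

lemma snd_phiH:
  assumes "X \<noteq> south_pole"
  shows "snd (phiH X) = (1 - (norm X)\<^sup>2) / (norm (X - south_pole))\<^sup>2"
proof -
  have A: "(norm (X - south_pole))\<^sup>2 = (norm X)\<^sup>2 + 2 * snd X + 1"
    unfolding power2_norm_eq_inner south_pole_def
    by (cases X) (simp add: inner_diff_left inner_diff_right inner_Pair inner_commute algebra_simps)
  moreover have "(norm (X - south_pole))\<^sup>2 > 0" using assms by simp
  ultimately show ?thesis
    unfolding phiH_eq_sphere_inversion sphere_inversion_def
    by (simp add: south_pole_def field_simps)
qed

lemma phiH_in_H3: "norm X < 1 \<Longrightarrow> phiH X \<in> H3"
  using snd_phiH[OF ball_ne_south_pole] ball_ne_south_pole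
  by (auto simp: H3_def abs_square_less_1 intro!: divide_pos_pos)

lemma hdist_eq_ball_dist:
  assumes "p \<in> H3" "q \<in> H3"
  shows "hdist p q = ball_dist (phiH p) (phiH q)"
proof -
  define A B where "A = (norm (p - south_pole))\<^sup>2" "B = (norm (q - south_pole))\<^sup>2"
  have AB: "A > 0" "B > 0" using H3_ne_south_pole assms unfolding A_B_def by auto
  have t: "snd p > 0" "snd q > 0" using assms unfolding H3_def by auto
  have "2 * (norm (phiH p - phiH q))\<^sup>2 / ((1 - (norm (phiH p))\<^sup>2) * (1 - (norm (phiH q))\<^sup>2))
      = 2 * (4 * (norm (p - q))\<^sup>2 / (A * B)) / ((4 * snd p / A) * (4 * snd q / B))"
    using norm_sphere_inversion_diff[of p south_pole q 2] norm_phiH H3_ne_south_pole assms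
    unfolding A_B_def phiH_eq_sphere_inversion by simp
  also have "\<dots> = ((cmod (fst p - fst q))\<^sup>2 + (snd p - snd q)\<^sup>2) / (2 * snd p * snd q)"
    using AB t by (simp add: field_simps norm_v3_sq)
  finally show ?thesis unfolding hdist_def ball_dist_def by simp
qed

lemma hdist_commute: "hdist p q = hdist q p"
  unfolding hdist_def by (simp add: norm_minus_commute mult.commute mult.left_commute power2_commute)

lemma hdist_nonneg: "p \<in> H3 \<Longrightarrow> q \<in> H3 \<Longrightarrow> hdist p q \<ge> 0"
  by (simp add: hdist_eq_ball_dist ball_dist_nonneg norm_phiH_less_1)

lemma continuous_on_phiH: "continuous_on H3 phiH"
  unfolding phiH_eq_sphere_inversion sphere_inversion_def
  by (intro continuous_intros) (auto dest: H3_ne_south_pole)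

definition base_point :: hpt where "base_point = (0, 1)"

lemma base_point_in_H3 [simp]: "base_point \<in> H3"
  unfolding base_point_def H3_def by simp

lemma phiH_base_point [simp]: "phiH base_point = 0"
  unfolding base_point_def phiH_def Let_def by (simp add: zero_prod_def)

lemma norm_phiS [simp]: "norm (phiS x) = 1"
proof (cases x)
  case (Some z)
  have "(z, 0) \<noteq> south_pole" unfolding south_pole_def by simp
  then have "(norm (phiH (z, 0)))\<^sup>2 = 1" using norm_phiH by simp
  then show ?thesis unfolding phiS_def Some by (simp add: abs_square_eq_1)
qed (simp add: phiS_def)

definition phiS_inv :: "v3 \<Rightarrow> spt" where
  "phiS_inv X = (if X = south_pole then None else Some (fst (phiH X)))"

lemma phiH_south_pole [simp]: "phiH south_pole = south_pole"
  by (simp add: phiH_eq_sphere_inversion sphere_inversion_def)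

lemma phiS_inv_phiS [simp]: "phiS_inv (phiS x) = x"
proof (cases x)
  case (Some z)
  have ne: "(z, 0) \<noteq> south_pole" unfolding south_pole_def by simp
  then have "phiH (z, 0) \<noteq> south_pole" by (metis phiH_phiH phiH_south_pole)
  then show ?thesis using phiH_phiH[OF ne] unfolding phiS_inv_def Some by (simp add: phiS_def)
qed (simp add: phiS_def phiS_inv_def south_pole_def)

lemma phiS_inj: "phiS x = phiS y \<Longrightarrow> x = y"
  by (metis phiS_inv_phiS)

lemma phiS_phiS_inv [simp]: "norm X = 1 \<Longrightarrow> phiS (phiS_inv X) = X"
proof (cases "X = south_pole")
  case False
  assume "norm X = 1"
  then have "(fst (phiH X), 0) = phiH X" using snd_phiH[OF False] by (simp add: prod_eq_iff)
  then have "phiS (phiS_inv X) = phiH (phiH X)" using False by (simp add: phiS_inv_def phiS_def)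
  then show ?thesis using False by simp
qed (simp add: phiS_inv_def phiS_def south_pole_def)

lemma range_phiS: "range phiS = sphere 0 1"
proof
  show "sphere 0 1 \<subseteq> range phiS"
    by (metis (mono_tags) mem_sphere_0 phiS_phiS_inv rangeI subsetI)
qed auto

lemma s_continuous_uniformly:
  assumes "s_continuous f" "e > 0"
  obtains d where "d > 0" "\<And>x y. sdist x y < d \<Longrightarrow> sdist (f x) (f y) < e"
proof -
  have "continuous_on (sphere 0 1) (\<lambda>X. phiS (f (phiS_inv X)))"
    using assms(1) unfolding s_continuous_def sdist_def continuous_on_iff range_phiS[symmetric]
    by simp
  then have "uniformly_continuous_on (sphere 0 1) (\<lambda>X. phiS (f (phiS_inv X)))"
    by (rule compact_uniformly_continuous) simp
  then show ?thesis
    using assms(2) that unfolding uniformly_continuous_on_def range_phiS[symmetric] sdist_def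
    by (simp add: dist_commute) blast
qed

definition bemb_inv :: "v3 \<Rightarrow> hpt + spt" where
  "bemb_inv X = (if norm X < 1 then Inl (phiH X) else Inr (phiS_inv X))"

lemma norm_bemb_le_1: "y \<in> Hbar \<Longrightarrow> norm (bemb y) \<le> 1"
  unfolding Hbar_def using norm_phiH_less_1 by (auto simp: less_imp_le)

lemma bemb_inv_bemb [simp]: "y \<in> Hbar \<Longrightarrow> bemb_inv (bemb y) = y"
  unfolding Hbar_def bemb_inv_def using norm_phiH_less_1 H3_ne_south_pole by auto

lemma bemb_bemb_inv [simp]: "norm X \<le> 1 \<Longrightarrow> bemb (bemb_inv X) = X"
  unfolding bemb_inv_def using ball_ne_south_pole by auto

lemma bemb_inv_in_Hbar: "norm X \<le> 1 \<Longrightarrow> bemb_inv X \<in> Hbar"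
  unfolding bemb_inv_def Hbar_def using phiH_in_H3 by auto

lemma bemb_Hbar: "bemb ` Hbar = cball 0 1"
  using norm_bemb_le_1 bemb_bemb_inv bemb_inv_in_Hbar by (force simp: image_iff)

definition ball_conj :: "(hpt \<Rightarrow> hpt) \<Rightarrow> (spt \<Rightarrow> spt) \<Rightarrow> v3 \<Rightarrow> v3" where
  "ball_conj G g X = bemb (bext G g (bemb_inv X))"

lemma ball_conj_bemb: "y \<in> Hbar \<Longrightarrow> ball_conj G g (bemb y) = bemb (bext G g y)"
  unfolding ball_conj_def by simp

lemma ball_conj_phiH: "p \<in> H3 \<Longrightarrow> ball_conj G g (phiH p) = phiH (G p)"
  using ball_conj_bemb[of "Inl p"] by (simp add: Hbar_def)

lemma ball_conj_phiS: "ball_conj G g (phiS x) = phiS (g x)"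
  using ball_conj_bemb[of "Inr x"] by (simp add: Hbar_def)

lemma ball_conj_ball: "norm X < 1 \<Longrightarrow> ball_conj G g X = phiH (G (phiH X))"
  using ball_conj_phiH[OF phiH_in_H3, of X] ball_ne_south_pole by simp

lemma bext_in_Hbar: "\<forall>p\<in>H3. G p \<in> H3 \<Longrightarrow> y \<in> Hbar \<Longrightarrow> bext G g y \<in> Hbar"
  unfolding Hbar_def by auto

lemma norm_ball_conj_le_1: "\<forall>p\<in>H3. G p \<in> H3 \<Longrightarrow> norm X \<le> 1 \<Longrightarrow> norm (ball_conj G g X) \<le> 1"
  unfolding ball_conj_def by (intro norm_bemb_le_1 bext_in_Hbar bemb_inv_in_Hbar)

lemma bar_continuous_iff: "bar_continuous G g \<longleftrightarrow> continuous_on (cball 0 1) (ball_conj G g)"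
  unfolding bar_continuous_def continuous_on_iff bemb_Hbar[symmetric]
  by (simp add: ball_conj_bemb)

lemma continuous_on_cball_eq:
  fixes f g :: "'a::real_normed_vector \<Rightarrow> 'b::real_normed_vector"
  assumes "continuous_on (cball c r) f" "continuous_on (cball c r) g" "r > 0"
    and "\<And>X. X \<in> ball c r \<Longrightarrow> f X = g X" "X \<in> cball c r"
  shows "f X = g X"
proof -
  have "continuous_on (closure (ball c r)) (\<lambda>X. f X - g X)"
    using assms(1-3) by (auto intro!: continuous_intros)
  moreover have "X \<in> closure (ball c r)" using assms(3,5) by simp
  ultimately have "f X - g X = 0"
    using continuous_constant_on_closure[of "ball c r" "\<lambda>X. f X - g X" 0] assms(4) by simp
  then show ?thesis by simp
qed

lemma bar_continuous_cong: "\<forall>p\<in>H3. G p = G' p \<Longrightarrow> bar_continuous G g = bar_continuous G' g"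
proof -
  assume "\<forall>p\<in>H3. G p = G' p"
  then have "\<forall>y\<in>Hbar. bext G g y = bext G' g y" unfolding Hbar_def by auto
  then show ?thesis unfolding bar_continuous_def by simp
qed

lemma ball_conj_comp:
  assumes "\<forall>p\<in>H3. G' p \<in> H3" "norm X \<le> 1"
  shows "ball_conj (G \<circ> G') (g \<circ> g') X = ball_conj G g (ball_conj G' g' X)"
proof -
  have y: "bemb_inv X \<in> Hbar" using bemb_inv_in_Hbar[OF assms(2)] .
  then have "bext (G \<circ> G') (g \<circ> g') (bemb_inv X) = bext G g (bext G' g' (bemb_inv X))"
    unfolding Hbar_def by auto
  then show ?thesis
    unfolding ball_conj_def[of G' g'] using ball_conj_bemb[OF bext_in_Hbar[OF assms(1) y]]
    by (simp add: ball_conj_def)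
qed

lemma bar_continuous_comp:
  assumes "bar_continuous G g" "bar_continuous G' g'" "\<forall>p\<in>H3. G' p \<in> H3"
  shows "bar_continuous (G \<circ> G') (g \<circ> g')"
proof -
  have "continuous_on (cball 0 1) (ball_conj G g \<circ> ball_conj G' g')"
    using assms norm_ball_conj_le_1[OF assms(3)] unfolding bar_continuous_iff
    by (intro continuous_on_compose) (auto elim: continuous_on_subset)
  then show ?thesis
    unfolding bar_continuous_iff by (rule continuous_on_eq) (simp add: ball_conj_comp[OF assms(3)])
qed

lemma bar_continuous_boundary_unique:
  assumes "bar_continuous G g" "bar_continuous G' g'" "\<forall>p\<in>H3. G p = G' p"
  shows "g = g'"
proof
  fix x
  have "ball_conj G g X = ball_conj G' g' X" if "norm X \<le> 1" for X
  proof (rule continuous_on_cball_eq[of 0 1 "ball_conj G g" "ball_conj G' g'"])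
    show "continuous_on (cball 0 1) (ball_conj G g)" "continuous_on (cball 0 1) (ball_conj G' g')"
      using assms(1,2) by (simp_all add: bar_continuous_iff)
    show "ball_conj G g Y = ball_conj G' g' Y" if "Y \<in> ball 0 1" for Y
      using that assms(3) phiH_in_H3[of Y] by (simp add: ball_conj_ball)
  qed (use that in auto)
  then have "ball_conj G g (phiS x) = ball_conj G' g' (phiS x)" by simp
  then have "phiS (g x) = phiS (g' x)" by (simp add: ball_conj_phiS)
  then show "g x = g' x" by (rule phiS_inj)
qed

section \<open>Isometries are Moebius motions\<close>

text \<open>A parameter \<open>(a, R)\<close> stands for the motion \<open>X \<mapsto> a \<oplus> R X\<close> of the closed ball; parameters
  with \<open>|a| \<le> r < 1\<close> form a compact set.\<close>

type_synonym motion_param = "v3 \<times> (v3 \<times> v3 \<times> v3)"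

definition valid_param :: "motion_param \<Rightarrow> bool" where
  "valid_param P \<longleftrightarrow> norm (fst P) < 1 \<and> orthonormal_frame (snd P)"

definition ball_motion :: "motion_param \<Rightarrow> v3 \<Rightarrow> v3" where
  "ball_motion P X = mobius_add (fst P) (frame_apply (snd P) X)"

definition H3_motion :: "motion_param \<Rightarrow> hpt \<Rightarrow> hpt" where
  "H3_motion P = restrict (\<lambda>p. phiH (ball_motion P (phiH p))) H3"

definition S_motion :: "motion_param \<Rightarrow> spt \<Rightarrow> spt" where
  "S_motion P x = phiS_inv (ball_motion P (phiS x))"

definition motion :: "motion_param \<Rightarrow> (hpt \<Rightarrow> hpt) \<times> (spt \<Rightarrow> spt)" where
  "motion P = (H3_motion P, S_motion P)"

lemma ball_motion_0 [simp]: "ball_motion P 0 = fst P"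
  unfolding ball_motion_def by simp

lemma norm_ball_motion_less_1: "valid_param P \<Longrightarrow> norm X < 1 \<Longrightarrow> norm (ball_motion P X) < 1"
  unfolding ball_motion_def valid_param_def by (intro norm_mobius_add_less) (auto simp: norm_frame_apply)

lemma norm_ball_motion_eq_1: "valid_param P \<Longrightarrow> norm X = 1 \<Longrightarrow> norm (ball_motion P X) = 1"
  unfolding ball_motion_def valid_param_def by (intro norm_mobius_add_eq_1) (auto simp: norm_frame_apply)

lemma ball_dist_ball_motion:
  assumes "valid_param P" "norm X < 1" "norm Y < 1"
  shows "ball_dist (ball_motion P X) (ball_motion P Y) = ball_dist X Y"
proof -
  have "orthonormal_frame (snd P)" "norm (fst P) < 1" using assms(1) unfolding valid_param_def by auto
  then show ?thesis
    unfolding ball_motion_def using assms(2,3)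
    by (simp add: ball_dist_mobius_add norm_frame_apply) (simp add: ball_dist_def norm_frame_apply
        norm_frame_apply_diff)
qed

lemma ball_motion_inj:
  assumes P: "valid_param P" and "norm X \<le> 1" "norm Y \<le> 1" "ball_motion P X = ball_motion P Y"
  shows "X = Y"
proof -
  have a: "norm (fst P) < 1" and F: "orthonormal_frame (snd P)" using P unfolding valid_param_def by auto
  have "mobius_add (- fst P) (ball_motion P X) = mobius_add (- fst P) (ball_motion P Y)"
    using assms(4) by simp
  then have "frame_apply (snd P) X = frame_apply (snd P) Y"
    unfolding ball_motion_def using a assms(2,3) by (simp add: norm_frame_apply[OF F])
  then show ?thesis using bij_frame_apply[OF F] by (simp add: bij_def inj_eq)
qed

lemma ball_motion_surj:
  assumes P: "valid_param P" and Y: "norm Y < 1"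
  obtains X where "norm X < 1" "ball_motion P X = Y"
proof -
  have a: "norm (fst P) < 1" and F: "orthonormal_frame (snd P)" using P unfolding valid_param_def by auto
  obtain X where X: "frame_apply (snd P) X = mobius_add (- fst P) Y"
    using bij_frame_apply[OF F] by (metis bij_pointE)
  have "norm X < 1"
    using norm_mobius_add_less[of "- fst P" Y] a Y X norm_frame_apply[OF F, of X] by simp
  moreover have "ball_motion P X = Y" unfolding ball_motion_def X using a Y by simp
  ultimately show ?thesis using that by blast
qed

lemma continuous_on_ball_motion:
  "continuous_on ({P. valid_param P} \<times> cball 0 1) (\<lambda>z. ball_motion (fst z) (snd z))"
proof -
  have "continuous_on ({P. valid_param P} \<times> cball 0 1)
      (\<lambda>z::motion_param \<times> v3. (fst (fst z), frame_apply (snd (fst z)) (snd z)))"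
    unfolding frame_apply_def by (intro continuous_intros)
  then have "continuous_on ({P. valid_param P} \<times> cball 0 1)
          ((\<lambda>z. mobius_add (fst z) (snd z)) \<circ> (\<lambda>z. (fst (fst z), frame_apply (snd (fst z)) (snd z))))"
    by (rule continuous_on_compose[OF _ continuous_on_subset[OF continuous_on_mobius_add]])
      (auto simp: valid_param_def norm_frame_apply)
  then show ?thesis unfolding ball_motion_def comp_def by simp
qed

lemma continuous_on_ball_motion_right: "valid_param P \<Longrightarrow> continuous_on (cball 0 1) (ball_motion P)"
proof -
  assume P: "valid_param P"
  have "continuous_on (cball 0 1) ((\<lambda>z. ball_motion (fst z) (snd z)) \<circ> Pair P)"
    by (rule continuous_on_compose[OF _ continuous_on_subset[OF continuous_on_ball_motion]])
      (use P in \<open>auto intro: continuous_intros\<close>)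
  then show ?thesis by (simp add: comp_def)
qed

lemma phiH_H3_motion: "valid_param P \<Longrightarrow> p \<in> H3 \<Longrightarrow> phiH (H3_motion P p) = ball_motion P (phiH p)"
  unfolding H3_motion_def
  using ball_ne_south_pole[OF norm_ball_motion_less_1[OF _ norm_phiH_less_1]] by simp

lemma H3_motion_in_H3: "valid_param P \<Longrightarrow> p \<in> H3 \<Longrightarrow> H3_motion P p \<in> H3"
  unfolding H3_motion_def by (simp add: phiH_in_H3 norm_ball_motion_less_1 norm_phiH_less_1)

lemma phiS_S_motion: "valid_param P \<Longrightarrow> phiS (S_motion P x) = ball_motion P (phiS x)"
  unfolding S_motion_def by (simp add: norm_ball_motion_eq_1)

lemma ball_conj_motion:
  assumes P: "valid_param P" and X: "norm X \<le> 1"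
  shows "ball_conj (H3_motion P) (S_motion P) X = ball_motion P X"
proof (cases "norm X < 1")
  case True
  then show ?thesis
    using phiH_H3_motion[OF P phiH_in_H3[OF True]] ball_ne_south_pole[OF True]
      ball_ne_south_pole[OF norm_ball_motion_less_1[OF P True]]
    by (simp add: ball_conj_ball)
next
  case False
  then have "norm X = 1" using X by simp
  then show ?thesis
    using ball_conj_phiS[of "H3_motion P" "S_motion P" "phiS_inv X"] phiS_S_motion[OF P] by simp
qed

lemma motion_in_Isom:
  assumes P: "valid_param P"
  shows "motion P \<in> Isom"
proof -
  have into: "\<forall>p\<in>H3. H3_motion P p \<in> H3" using H3_motion_in_H3[OF P] by blast
  have "inj_on (H3_motion P) H3"
  proof (rule inj_onI)
    fix p q assume pq: "p \<in> H3" "q \<in> H3" "H3_motion P p = H3_motion P q"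
    then have eq: "ball_motion P (phiH p) = ball_motion P (phiH q)"
      using phiH_H3_motion[OF P pq(1)] phiH_H3_motion[OF P pq(2)] by simp
    have "phiH p = phiH q"
      by (rule ball_motion_inj[OF P _ _ eq]) (use norm_phiH_less_1[OF pq(1)] norm_phiH_less_1[OF pq(2)] in auto)
    then show "p = q" using pq H3_ne_south_pole phiH_phiH by metis
  qed
  moreover have "H3 \<subseteq> H3_motion P ` H3"
  proof
    fix q assume q: "q \<in> H3"
    obtain X where X: "norm X < 1" "ball_motion P X = phiH q"
      using ball_motion_surj[OF P norm_phiH_less_1[OF q]] .
    then have "H3_motion P (phiH X) = q"
      using phiH_in_H3[OF X(1)] ball_ne_south_pole[OF X(1)] H3_ne_south_pole[OF q]
      by (simp add: H3_motion_def)
    then show "q \<in> H3_motion P ` H3" using phiH_in_H3[OF X(1)] by blast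
  qed
  ultimately have "bij_betw (H3_motion P) H3 H3" using into by (auto simp: bij_betw_def)
  moreover have "hdist (H3_motion P p) (H3_motion P q) = hdist p q" if "p \<in> H3" "q \<in> H3" for p q
    using that into by (simp add: hdist_eq_ball_dist phiH_H3_motion[OF P] ball_dist_ball_motion[OF P]
        norm_phiH_less_1)
  moreover have "bar_continuous (H3_motion P) (S_motion P)"
    unfolding bar_continuous_iff using continuous_on_ball_motion_right[OF P]
    by (rule continuous_on_eq) (simp add: ball_conj_motion[OF P])
  ultimately show ?thesis unfolding Isom_def motion_def H3_motion_def by auto
qed

lemma hdist_H3_motion:
  "valid_param P \<Longrightarrow> p \<in> H3 \<Longrightarrow> q \<in> H3 \<Longrightarrow> hdist (H3_motion P p) (H3_motion P q) = hdist p q"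
  using motion_in_Isom[of P] unfolding Isom_def motion_def by auto

lemma eq_motion_if_ball_conj_eq:
  assumes G: "G \<in> extensional H3" "\<forall>p\<in>H3. G p \<in> H3"
    and conj: "\<And>X. norm X \<le> 1 \<Longrightarrow> ball_conj G g X = ball_motion P X"
  shows "(G, g) = motion P"
proof -
  have "G p = H3_motion P p" if "p \<in> H3" for p
    using conj[of "phiH p"] ball_conj_phiH[OF that, of G g] norm_phiH_less_1[OF that]
      phiH_phiH[OF H3_ne_south_pole[OF bspec[OF G(2) that]]]
    by (simp add: H3_motion_def that)
  then have "G = H3_motion P" using G(1) by (intro extensionalityI[of _ H3]) (auto simp: H3_motion_def)
  moreover have "g = S_motion P"
  proof
    fix x
    have "phiS (g x) = ball_motion P (phiS x)" using conj[of "phiS x"] by (simp add: ball_conj_phiS)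
    then show "g x = S_motion P x" unfolding S_motion_def by (metis phiS_inv_phiS)
  qed
  ultimately show ?thesis unfolding motion_def by simp
qed

lemma Isom_imp_motion:
  assumes c: "c \<in> Isom"
  obtains P where "valid_param P" "c = motion P"
proof -
  obtain G g where cG: "c = (G, g)" by fastforce
  have G: "G \<in> extensional H3" "\<forall>p\<in>H3. G p \<in> H3"
    and iso: "\<And>p q. p \<in> H3 \<Longrightarrow> q \<in> H3 \<Longrightarrow> hdist (G p) (G q) = hdist p q"
    and cont: "continuous_on (cball 0 1) (ball_conj G g)"
    using c unfolding cG Isom_def bar_continuous_iff bij_betw_def by auto
  define a where "a = phiH (G base_point)"
  have a: "norm a < 1" unfolding a_def by (simp add: G(2) norm_phiH_less_1)
  have conj_ball: "norm (ball_conj G g X) < 1" if "norm X < 1" for X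
    using that by (simp add: ball_conj_ball G(2) phiH_in_H3 norm_phiH_less_1)
  have conj_dist: "ball_dist (ball_conj G g X) (ball_conj G g Y) = ball_dist X Y"
    if "norm X < 1" "norm Y < 1" for X Y
    using that iso[OF phiH_in_H3 phiH_in_H3] G(2) ball_ne_south_pole
    by (simp add: ball_conj_ball hdist_eq_ball_dist phiH_in_H3)
  \<comment> \<open>Moving \<open>a\<close> back to \<open>0\<close> leaves an isometry of the ball fixing \<open>0\<close>, hence an orthogonal map.\<close>
  define N where "N X = mobius_add (-a) (ball_conj G g X)" for X
  have "norm (N X) < 1" if "norm X < 1" for X
    unfolding N_def using a conj_ball[OF that] by (simp add: norm_mobius_add_less)
  moreover have "ball_dist (N X) (N Y) = ball_dist X Y" if "norm X < 1" "norm Y < 1" for X Y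
    unfolding N_def using a conj_ball that by (simp add: ball_dist_mobius_add conj_dist)
  moreover have "N 0 = 0"
    unfolding N_def a_def using ball_conj_phiH[OF base_point_in_H3, of G g]
    by (simp add: mobius_add_neg_self)
  ultimately obtain F where F: "orthonormal_frame F" "\<And>X. norm X < 1 \<Longrightarrow> N X = frame_apply F X"
    using ball_isometry_fixing_0_eq_frame[of N] by blast
  define P where "P = (a, F)"
  have P: "valid_param P" unfolding P_def valid_param_def using a F(1) by simp
  have on_ball: "ball_conj G g X = ball_motion P X" if "norm X < 1" for X
  proof -
    have "ball_conj G g X = mobius_add a (N X)"
      unfolding N_def using a less_imp_le[OF conj_ball[OF that]] by simp
    then show ?thesis unfolding P_def ball_motion_def F(2)[OF that] by simp
  qed
  have "ball_conj G g X = ball_motion P X" if "norm X \<le> 1" for X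
    by (rule continuous_on_cball_eq[of 0 1 "ball_conj G g" "ball_motion P"])
      (use cont continuous_on_ball_motion_right[OF P] that on_ball in auto)
  then show ?thesis using that P eq_motion_if_ball_conj_eq[OF G] unfolding cG by blast
qed

lemma Isom_into_H3: "c \<in> Isom \<Longrightarrow> p \<in> H3 \<Longrightarrow> fst c p \<in> H3"
  unfolding Isom_def bij_betw_def by auto

lemma iso_comp_in_Isom:
  assumes a: "a \<in> Isom" and b: "b \<in> Isom"
  shows "iso_comp a b \<in> Isom"
proof -
  obtain A g where a': "a = (A, g)" by fastforce
  obtain B h where b': "b = (B, h)" by fastforce
  have A: "bij_betw A H3 H3" "\<And>p q. p \<in> H3 \<Longrightarrow> q \<in> H3 \<Longrightarrow> hdist (A p) (A q) = hdist p q"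
    "bar_continuous A g" using a unfolding a' Isom_def by auto
  have B: "bij_betw B H3 H3" "\<And>p q. p \<in> H3 \<Longrightarrow> q \<in> H3 \<Longrightarrow> hdist (B p) (B q) = hdist p q"
    "bar_continuous B h" using b unfolding b' Isom_def by auto
  have BH: "\<forall>p\<in>H3. B p \<in> H3" using B(1) by (auto simp: bij_betw_def)
  have "bij_betw (restrict (A \<circ> B) H3) H3 H3"
    using bij_betw_trans[OF B(1) A(1)] by (rule bij_betw_cong[THEN iffD1, rotated]) auto
  moreover have "bar_continuous (restrict (A \<circ> B) H3) (g \<circ> h)"
    using bar_continuous_comp[OF A(3) B(3) BH] by (subst bar_continuous_cong) auto
  ultimately show ?thesis
    unfolding iso_comp_def a' b' Isom_def using A(2) B(2) BH by auto
qed

text \<open>Boundedness for \<open>hdist\<close>, read off in the ball model: the set stays in a ball of radius \<open>< 1\<close>.\<close>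

definition hbounded :: "hpt set \<Rightarrow> bool" where
  "hbounded S \<longleftrightarrow> S \<subseteq> H3 \<and> (\<exists>r<1. \<forall>p\<in>S. norm (phiH p) \<le> r)"

lemma compact_imp_hbounded:
  assumes "compact K" "K \<subseteq> H3"
  shows "hbounded K"
proof -
  have "compact (phiH ` K)"
    using compact_continuous_image[OF continuous_on_subset[OF continuous_on_phiH assms(2)] assms(1)] .
  moreover have "phiH ` K \<subseteq> ball 0 1" using assms(2) norm_phiH_less_1 by auto
  ultimately obtain r where "r < 1" "\<And>X. X \<in> phiH ` K \<Longrightarrow> norm X \<le> r"
    using compact_in_ball_norm_bound by blast
  then show ?thesis unfolding hbounded_def using assms(2) by blast
qed

lemma hbounded_subset: "hbounded T \<Longrightarrow> S \<subseteq> T \<Longrightarrow> hbounded S"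
  unfolding hbounded_def by blast

lemma hbounded_hdist_bounded:
  assumes "hbounded S" "q \<in> H3"
  obtains R where "\<And>p. p \<in> S \<Longrightarrow> hdist p q \<le> R"
proof -
  obtain r where r: "r < 1" "\<forall>p\<in>S. norm (phiH p) \<le> r" and S: "S \<subseteq> H3"
    using assms(1) unfolding hbounded_def by blast
  obtain R where R: "\<And>X. norm X \<le> r \<Longrightarrow> ball_dist X (phiH q) \<le> R"
    using ball_dist_bounded[OF r(1) norm_phiH_less_1[OF assms(2)]] by blast
  have "hdist p q \<le> R" if "p \<in> S" for p
    using R[of "phiH p"] r(2) that subsetD[OF S that] assms(2) by (simp add: hdist_eq_ball_dist)
  then show ?thesis by (rule that)
qed

lemma hbounded_hdist_neighbourhood:
  assumes "hbounded S"
  shows "hbounded {p \<in> H3. \<exists>q\<in>S. hdist p q \<le> R}"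
proof -
  obtain r where r: "r < 1" "\<forall>p\<in>S. norm (phiH p) \<le> r" and S: "S \<subseteq> H3"
    using assms unfolding hbounded_def by blast
  obtain r' where r': "r' < 1"
    "\<And>X Y::v3. norm X < 1 \<Longrightarrow> norm Y \<le> r \<Longrightarrow> ball_dist X Y \<le> R \<Longrightarrow> norm X \<le> r'"
    using norm_bounded_if_ball_dist_bounded[OF r(1)] by blast
  have "norm (phiH p) \<le> r'" if "p \<in> H3" "q \<in> S" "hdist p q \<le> R" for p q
    using r'(2)[OF norm_phiH_less_1[OF that(1)], of "phiH q"] r(2) that subsetD[OF S that(2)]
    by (simp add: hdist_eq_ball_dist)
  then show ?thesis unfolding hbounded_def using r'(1) by blast
qed

lemma hbounded_lipschitz_image:
  assumes S: "hbounded S" and F: "\<forall>p\<in>H3. F p \<in> H3"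
    and lip: "\<forall>p\<in>H3. \<forall>q\<in>H3. hdist (F p) (F q) \<le> L * hdist p q"
  shows "hbounded (F ` S)"
proof (cases "S = {}")
  case False
  then obtain q where q: "q \<in> S" by blast
  have SH: "S \<subseteq> H3" using S unfolding hbounded_def by blast
  obtain R where R: "\<And>p. p \<in> S \<Longrightarrow> hdist p q \<le> R"
    using hbounded_hdist_bounded[OF S] q SH by blast
  have "F ` S \<subseteq> {x \<in> H3. \<exists>y\<in>{F q}. hdist x y \<le> \<bar>L\<bar> * R}"
  proof clarsimp
    fix p assume p: "p \<in> S"
    have "hdist (F p) (F q) \<le> L * hdist p q" using lip SH p q by blast
    also have "\<dots> \<le> \<bar>L\<bar> * hdist p q"
      using hdist_nonneg[of p q] SH p q by (intro mult_right_mono) auto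
    also have "\<dots> \<le> \<bar>L\<bar> * R" using R[OF p] by (intro mult_left_mono) auto
    finally show "F p \<in> H3 \<and> hdist (F p) (F q) \<le> \<bar>L\<bar> * R" using F SH p by blast
  qed
  moreover have "hbounded {F q}" using F SH q by (intro compact_imp_hbounded) auto
  ultimately show ?thesis using hbounded_subset hbounded_hdist_neighbourhood by blast
qed (simp add: hbounded_def lt_ex)

lemma hbounded_H3_motion_image: "valid_param P \<Longrightarrow> hbounded S \<Longrightarrow> hbounded (H3_motion P ` S)"
  by (rule hbounded_lipschitz_image[where L = 1]) (auto simp: H3_motion_in_H3 hdist_H3_motion)

lemma hbounded_Isom_orbit:
  assumes a: "\<And>n. a n \<in> Isom" and y: "hbounded (range y)"
    and ay: "hbounded (range (\<lambda>n. fst (a n) (y n)))" and q: "q \<in> H3"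
  shows "hbounded (range (\<lambda>n. fst (a n) q))"
proof -
  have yH: "y n \<in> H3" for n using y unfolding hbounded_def by blast
  obtain R where R: "\<And>n. hdist q (y n) \<le> R"
    using hbounded_hdist_bounded[OF y q] by (metis hdist_commute rangeI)
  have "hdist (fst (a n) q) (fst (a n) (y n)) \<le> R" for n
    using a[of n] R[of n] q yH[of n] unfolding Isom_def by auto
  moreover have "fst (a n) q \<in> H3" for n using Isom_into_H3[OF a q] .
  ultimately have "range (\<lambda>n. fst (a n) q) \<subseteq> {p \<in> H3. \<exists>z\<in>range (\<lambda>n. fst (a n) (y n)). hdist p z \<le> R}"
    by blast
  then show ?thesis using hbounded_subset hbounded_hdist_neighbourhood[OF ay] by blast
qed

lemma Isom_hbounded_param:
  assumes "\<And>n. c n \<in> Isom" "hbounded (range (\<lambda>n. fst (c n) base_point))"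
  obtains P r where "r < 1" "\<And>n. valid_param (P n) \<and> c n = motion (P n) \<and> norm (fst (P n)) \<le> r"
proof -
  have "\<forall>n. \<exists>P. valid_param P \<and> c n = motion P" using Isom_imp_motion assms(1) by metis
  then obtain P where P: "\<And>n. valid_param (P n)" "\<And>n. c n = motion (P n)" by metis
  obtain r where "r < 1" "\<And>n. norm (phiH (fst (c n) base_point)) \<le> r"
    using assms(2) unfolding hbounded_def by blast
  moreover have "phiH (fst (c n) base_point) = fst (P n)" for n
    using phiH_H3_motion[OF P(1) base_point_in_H3] by (simp add: P(2) motion_def)
  ultimately show ?thesis using that P by metis
qed

lemma Isom_seqs_convergent_params:
  fixes a b :: "nat \<Rightarrow> (hpt \<Rightarrow> hpt) \<times> (spt \<Rightarrow> spt)"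
  assumes "\<And>n. a n \<in> Isom" "hbounded (range (\<lambda>n. fst (a n) base_point))"
    and "\<And>n. b n \<in> Isom" "hbounded (range (\<lambda>n. fst (b n) base_point))"
  obtains Pa Pb Pa0 Pb0 r where "strict_mono r"
    "\<And>n. valid_param (Pa n)" "\<And>n. a n = motion (Pa n)" "valid_param Pa0" "(\<lambda>n. Pa (r n)) \<longlonglongrightarrow> Pa0"
    "\<And>n. valid_param (Pb n)" "\<And>n. b n = motion (Pb n)" "valid_param Pb0" "(\<lambda>n. Pb (r n)) \<longlonglongrightarrow> Pb0"
proof -
  obtain Pa ra where ra: "ra < 1" "\<And>n. valid_param (Pa n) \<and> a n = motion (Pa n) \<and> norm (fst (Pa n)) \<le> ra"
    using Isom_hbounded_param[OF assms(1,2)] by blast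
  obtain Pb rb where rb: "rb < 1" "\<And>n. valid_param (Pb n) \<and> b n = motion (Pb n) \<and> norm (fst (Pb n)) \<le> rb"
    using Isom_hbounded_param[OF assms(3,4)] by blast
  define C where
    "C = (cball (0::v3) ra \<times> {F. orthonormal_frame F}) \<times> (cball (0::v3) rb \<times> {F. orthonormal_frame F})"
  have "compact C" unfolding C_def by (intro compact_Times compact_cball compact_orthonormal_frames)
  then have sC: "seq_compact C" by (rule compact_imp_seq_compact)
  have inC: "\<forall>n. (Pa n, Pb n) \<in> C"
  proof
    fix n
    have "Pa n \<in> cball 0 ra \<times> {F. orthonormal_frame F}" "Pb n \<in> cball 0 rb \<times> {F. orthonormal_frame F}"
      using ra(2)[of n] rb(2)[of n] unfolding valid_param_def by (simp_all add: mem_Times_iff)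
    then show "(Pa n, Pb n) \<in> C" unfolding C_def by simp
  qed
  obtain l r where l: "l \<in> C" and r: "strict_mono r" "((\<lambda>n. (Pa n, Pb n)) \<circ> r) \<longlonglongrightarrow> l"
    using seq_compactE[OF sC inC] by blast
  have "valid_param (fst l)" "valid_param (snd l)"
    using l ra(1) rb(1) unfolding C_def valid_param_def by auto
  moreover have "(\<lambda>n. Pa (r n)) \<longlonglongrightarrow> fst l" "(\<lambda>n. Pb (r n)) \<longlonglongrightarrow> snd l"
    using tendsto_fst[OF r(2)] tendsto_snd[OF r(2)] by (simp_all add: comp_def)
  ultimately show ?thesis using that r(1) ra(2) rb(2) by blast
qed

section \<open>Uniform convergence of Moebius motions\<close>

lemma ball_motion_tendsto_uniformly:
  assumes P: "\<And>n. valid_param (P n)" "valid_param P0" "P \<longlonglongrightarrow> P0" and e: "e > 0"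
  obtains d where "d > 0" "\<forall>\<^sub>F n in sequentially. \<forall>X Y. norm X \<le> 1 \<longrightarrow> norm Y \<le> 1 \<longrightarrow>
    dist X Y < d \<longrightarrow> dist (ball_motion (P n) X) (ball_motion P0 Y) < e"
proof -
  define PS where "PS = insert P0 (range P)"
  have "compact PS" unfolding PS_def by (rule compact_sequence_with_limit[OF P(3)])
  moreover have "PS \<subseteq> {P. valid_param P}" unfolding PS_def using P(1,2) by auto
  ultimately have "uniformly_continuous_on (PS \<times> cball 0 1) (\<lambda>z. ball_motion (fst z) (snd z))"
    by (intro compact_uniformly_continuous compact_Times compact_cball
        continuous_on_subset[OF continuous_on_ball_motion]) auto
  then obtain d where d: "d > 0" "\<forall>z\<in>PS \<times> cball 0 1. \<forall>z'\<in>PS \<times> cball 0 1.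
      dist z' z < d \<longrightarrow> dist (ball_motion (fst z') (snd z')) (ball_motion (fst z) (snd z)) < e"
    using e unfolding uniformly_continuous_on_def by blast
  have "\<forall>\<^sub>F n in sequentially. dist (P n) P0 < d / 2" using P(3) d(1) by (intro tendstoD) auto
  then have "\<forall>\<^sub>F n in sequentially. \<forall>X Y. norm X \<le> 1 \<longrightarrow> norm Y \<le> 1 \<longrightarrow>
    dist X Y < d / 2 \<longrightarrow> dist (ball_motion (P n) X) (ball_motion P0 Y) < e"
  proof eventually_elim
    case (elim n)
    show ?case
    proof (intro allI impI)
      fix X Y :: v3 assume "norm X \<le> 1" "norm Y \<le> 1" "dist X Y < d / 2"
      moreover have "dist (P n, X) (P0, Y) \<le> dist (P n) P0 + dist X Y"
        unfolding dist_Pair_Pair by (rule sqrt_sum_squares_le_sum) auto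
      ultimately show "dist (ball_motion (P n) X) (ball_motion P0 Y) < e"
        using d(2)[rule_format, of "(P0, Y)" "(P n, X)"] elim unfolding PS_def by auto
    qed
  qed
  then show ?thesis using that[of "d / 2"] d(1) by simp
qed

lemma H3_motion_tendsto_uniformly:
  assumes P: "\<And>n. valid_param (P n)" "valid_param P0" "P \<longlonglongrightarrow> P0"
    and S: "hbounded S" and e: "e > 0"
  obtains d where "d > 0" "\<forall>\<^sub>F n in sequentially. \<forall>p\<in>S. \<forall>q\<in>H3.
    dist (phiH q) (phiH p) < d \<longrightarrow> hdist (H3_motion (P n) q) (H3_motion P0 p) < e"
proof -
  obtain r where r: "r < 1" "\<And>p. p \<in> S \<Longrightarrow> norm (phiH (H3_motion P0 p)) \<le> r"
    using hbounded_H3_motion_image[OF P(2) S] unfolding hbounded_def by auto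
  obtain \<delta> where \<delta>: "\<delta> > 0" "\<And>X Y::v3. norm X \<le> r \<Longrightarrow> dist X Y < \<delta> \<Longrightarrow> norm Y < 1 \<and> ball_dist X Y < e"
    using ball_dist_small_if_dist_small[OF r(1) e] by blast
  obtain d where d: "d > 0" "\<forall>\<^sub>F n in sequentially. \<forall>X Y. norm X \<le> 1 \<longrightarrow> norm Y \<le> 1 \<longrightarrow>
    dist X Y < d \<longrightarrow> dist (ball_motion (P n) X) (ball_motion P0 Y) < \<delta>"
    using ball_motion_tendsto_uniformly[OF P \<delta>(1)] by blast
  have SH: "S \<subseteq> H3" using S unfolding hbounded_def by blast
  from d(2) have "\<forall>\<^sub>F n in sequentially. \<forall>p\<in>S. \<forall>q\<in>H3.
    dist (phiH q) (phiH p) < d \<longrightarrow> hdist (H3_motion (P n) q) (H3_motion P0 p) < e"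
  proof eventually_elim
    case (elim n)
    show ?case
    proof (intro ballI impI)
      fix p q assume p: "p \<in> S" and q: "q \<in> H3" and pq: "dist (phiH q) (phiH p) < d"
      have pH: "p \<in> H3" using SH p by blast
      have "dist (ball_motion (P n) (phiH q)) (ball_motion P0 (phiH p)) < \<delta>"
        using elim[rule_format, of "phiH q" "phiH p"] pq norm_phiH_less_1[OF q] norm_phiH_less_1[OF pH]
        by (simp add: less_imp_le)
      then have "ball_dist (phiH (H3_motion P0 p)) (phiH (H3_motion (P n) q)) < e"
        using \<delta>(2)[OF r(2)[OF p]] by (simp add: phiH_H3_motion P pH q dist_commute)
      then show "hdist (H3_motion (P n) q) (H3_motion P0 p) < e"
        by (simp add: hdist_eq_ball_dist H3_motion_in_H3 P pH q ball_dist_commute)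
    qed
  qed
  with d(1) that show ?thesis by blast
qed

lemma S_motion_tendsto_uniformly:
  assumes P: "\<And>n. valid_param (P n)" "valid_param P0" "P \<longlonglongrightarrow> P0" and e: "e > 0"
  obtains d where "d > 0"
    "\<forall>\<^sub>F n in sequentially. \<forall>x y. sdist y x < d \<longrightarrow> sdist (S_motion (P n) y) (S_motion P0 x) < e"
proof -
  obtain d where d: "d > 0" "\<forall>\<^sub>F n in sequentially. \<forall>X Y. norm X \<le> 1 \<longrightarrow> norm Y \<le> 1 \<longrightarrow>
    dist X Y < d \<longrightarrow> dist (ball_motion (P n) X) (ball_motion P0 Y) < e"
    using ball_motion_tendsto_uniformly[OF P e] by blast
  from d(2) have "\<forall>\<^sub>F n in sequentially. \<forall>x y. sdist y x < d \<longrightarrow> sdist (S_motion (P n) y) (S_motion P0 x) < e"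
  proof eventually_elim
    case (elim n)
    show ?case
    proof (intro allI impI)
      fix x y assume "sdist y x < d"
      then show "sdist (S_motion (P n) y) (S_motion P0 x) < e"
        using elim[rule_format, of "phiS y" "phiS x"] by (simp add: sdist_def phiS_S_motion P)
    qed
  qed
  with d(1) that show ?thesis by blast
qed

lemma lipschitz_imp_dist_phiH_small:
  assumes F: "\<forall>p\<in>H3. F p \<in> H3" and lip: "\<forall>p\<in>H3. \<forall>q\<in>H3. hdist (F p) (F q) \<le> L * hdist p q"
    and d: "d > 0"
  obtains h where "h > 0" "\<And>u v. u \<in> H3 \<Longrightarrow> v \<in> H3 \<Longrightarrow> hdist u v < h \<Longrightarrow> dist (phiH (F u)) (phiH (F v)) < d"
proof -
  define L' where "L' = max L 1"
  define h where "h = arcosh (1 + d\<^sup>2)"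
  have "h > 0" "L' > 0" unfolding h_def L'_def using d by auto
  have "dist (phiH (F u)) (phiH (F v)) < d" if uv: "u \<in> H3" "v \<in> H3" "hdist u v < h / L'" for u v
  proof -
    have "hdist (F u) (F v) \<le> L * hdist u v" using lip uv by blast
    also have "\<dots> \<le> L' * hdist u v"
      using hdist_nonneg[OF uv(1,2)] unfolding L'_def by (intro mult_right_mono) auto
    also have "\<dots> < L' * (h / L')" using uv(3) \<open>L' > 0\<close> by (intro mult_strict_left_mono)
    also have "\<dots> = h" using \<open>L' > 0\<close> by simp
    finally show ?thesis
      unfolding h_def using F uv d
      by (intro dist_less_if_ball_dist_less) (auto simp: hdist_eq_ball_dist norm_phiH_less_1)
  qed
  with \<open>h > 0\<close> \<open>L' > 0\<close> that[of "h / L'"] show ?thesis by simp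
qed

lemma H3_motion_sandwich_tendsto:
  assumes Pa: "\<And>n. valid_param (Pa n)" "valid_param Pa0" "Pa \<longlonglongrightarrow> Pa0"
    and Pb: "\<And>n. valid_param (Pb n)" "valid_param Pb0" "Pb \<longlonglongrightarrow> Pb0"
    and F: "\<forall>p\<in>H3. F p \<in> H3" and lip: "\<forall>p\<in>H3. \<forall>q\<in>H3. hdist (F p) (F q) \<le> L * hdist p q"
    and K: "hbounded K" and e: "e > 0"
  shows "\<forall>\<^sub>F n in sequentially. \<forall>p\<in>K.
    hdist (H3_motion (Pa n) (F (H3_motion (Pb n) p))) (H3_motion Pa0 (F (H3_motion Pb0 p))) < e"
proof -
  have KH: "K \<subseteq> H3" using K unfolding hbounded_def by blast
  have "hbounded (F ` H3_motion Pb0 ` K)"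
    by (intro hbounded_lipschitz_image[OF _ F lip] hbounded_H3_motion_image Pb(2) K)
  then obtain d where "d > 0" and d: "\<forall>\<^sub>F n in sequentially. \<forall>p\<in>F ` H3_motion Pb0 ` K. \<forall>q\<in>H3.
    dist (phiH q) (phiH p) < d \<longrightarrow> hdist (H3_motion (Pa n) q) (H3_motion Pa0 p) < e"
    using H3_motion_tendsto_uniformly[OF Pa _ e] by blast
  obtain h where "h > 0"
    and h: "\<And>u v. u \<in> H3 \<Longrightarrow> v \<in> H3 \<Longrightarrow> hdist u v < h \<Longrightarrow> dist (phiH (F u)) (phiH (F v)) < d"
    using lipschitz_imp_dist_phiH_small[OF F lip \<open>d > 0\<close>] by blast
  obtain d' where "d' > 0" and d': "\<forall>\<^sub>F n in sequentially. \<forall>p\<in>K. \<forall>q\<in>H3.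
    dist (phiH q) (phiH p) < d' \<longrightarrow> hdist (H3_motion (Pb n) q) (H3_motion Pb0 p) < h"
    using H3_motion_tendsto_uniformly[OF Pb K \<open>h > 0\<close>] by blast
  from d d' show ?thesis
  proof eventually_elim
    case (elim n)
    show ?case
    proof
      fix p assume p: "p \<in> K"
      then have pH: "p \<in> H3" using KH by blast
      have "hdist (H3_motion (Pb n) p) (H3_motion Pb0 p) < h"
        using elim(2) p pH \<open>d' > 0\<close> by simp
      then have "dist (phiH (F (H3_motion (Pb n) p))) (phiH (F (H3_motion Pb0 p))) < d"
        using h pH Pb by (simp add: H3_motion_in_H3)
      then show "hdist (H3_motion (Pa n) (F (H3_motion (Pb n) p))) (H3_motion Pa0 (F (H3_motion Pb0 p))) < e"
        using elim(1) p F pH Pb by (simp add: H3_motion_in_H3)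
    qed
  qed
qed

lemma S_motion_sandwich_tendsto:
  assumes Pa: "\<And>n. valid_param (Pa n)" "valid_param Pa0" "Pa \<longlonglongrightarrow> Pa0"
    and Pb: "\<And>n. valid_param (Pb n)" "valid_param Pb0" "Pb \<longlonglongrightarrow> Pb0"
    and f: "s_continuous f" and e: "e > 0"
  shows "\<forall>\<^sub>F n in sequentially. \<forall>x.
    sdist (S_motion (Pa n) (f (S_motion (Pb n) x))) (S_motion Pa0 (f (S_motion Pb0 x))) < e"
proof -
  obtain d1 where "d1 > 0" and d1: "\<forall>\<^sub>F n in sequentially. \<forall>x y.
      sdist y x < d1 \<longrightarrow> sdist (S_motion (Pa n) y) (S_motion Pa0 x) < e"
    using S_motion_tendsto_uniformly[OF Pa e] by blast
  obtain d2 where "d2 > 0" and d2: "\<And>x y. sdist x y < d2 \<Longrightarrow> sdist (f x) (f y) < d1"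
    using s_continuous_uniformly[OF f \<open>d1 > 0\<close>] by blast
  obtain d3 where "d3 > 0" and d3: "\<forall>\<^sub>F n in sequentially. \<forall>x y.
      sdist y x < d3 \<longrightarrow> sdist (S_motion (Pb n) y) (S_motion Pb0 x) < d2"
    using S_motion_tendsto_uniformly[OF Pb \<open>d2 > 0\<close>] by blast
  from d1 d3 show ?thesis
  proof eventually_elim
    case (elim n)
    show ?case
    proof
      fix x
      have "sdist (S_motion (Pb n) x) (S_motion Pb0 x) < d2"
        using elim(2) \<open>d3 > 0\<close> by (simp add: sdist_def)
      then show "sdist (S_motion (Pa n) (f (S_motion (Pb n) x))) (S_motion Pa0 (f (S_motion Pb0 x))) < e"
        using elim(1) d2 by blast
    qed
  qed
qed

section \<open>Recentring a derived sequence\<close>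

lemma equivariant_pair_lipschitz:
  assumes "equivariant_pair F f"
  obtains L where "\<forall>p\<in>H3. F p \<in> H3" "\<forall>p\<in>H3. \<forall>q\<in>H3. hdist (F p) (F q) \<le> L * hdist p q"
proof -
  have "bij_betw F H3 H3"
    and "\<exists>L\<ge>1. \<forall>p\<in>H3. \<forall>q\<in>H3. hdist p q / L \<le> hdist (F p) (F q) \<and> hdist (F p) (F q) \<le> L * hdist p q"
    using assms unfolding equivariant_pair_def bilipschitz_bij_def by auto
  then show ?thesis using that unfolding bij_betw_def by blast
qed

lemma Isom_conj_boundary:
  assumes cF: "bar_continuous F f" and F: "\<forall>p\<in>H3. F p \<in> H3" and \<gamma>: "\<gamma> \<in> Isom" and \<eta>: "\<eta> \<in> Isom"
    and int: "\<forall>x\<in>H3. F x = fst \<eta> (F (fst \<gamma> x))"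
  shows "f = snd \<eta> \<circ> f \<circ> snd \<gamma>"
proof (rule bar_continuous_boundary_unique[OF cF])
  show "bar_continuous (fst \<eta> \<circ> F \<circ> fst \<gamma>) (snd \<eta> \<circ> f \<circ> snd \<gamma>)"
    using \<eta> \<gamma> F Isom_into_H3[OF \<gamma>] by (intro bar_continuous_comp cF) (auto simp: Isom_def)
qed (use int in auto)

lemma equivariant_pair_lattice_recentre:
  assumes "equivariant_pair F f"
  obtains K where "compact K" "K \<subseteq> H3"
    "\<And>p. p \<in> H3 \<Longrightarrow> \<exists>\<gamma>\<in>Isom. \<exists>\<eta>\<in>Isom. fst \<gamma> p \<in> K \<and> (\<forall>x\<in>H3. F x = fst \<eta> (F (fst \<gamma> x)))"
proof -
  obtain \<Gamma>1 \<Gamma>2 where L1: "nice_lattice \<Gamma>1" and L2: "nice_lattice \<Gamma>2"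
    and conj: "(\<lambda>a. restrict (F \<circ> fst a \<circ> inv_into H3 F) H3) ` \<Gamma>1 = fst ` \<Gamma>2"
    using assms unfolding equivariant_pair_def by blast
  have bijF: "bij_betw F H3 H3" using assms unfolding equivariant_pair_def bilipschitz_bij_def by auto
  have "\<exists>K. compact K \<and> K \<subseteq> H3 \<and> (\<Union>a\<in>\<Gamma>1. fst a ` K) = H3"
    using L1 unfolding nice_lattice_def by (elim conjE) assumption
  then obtain K where K: "compact K" "K \<subseteq> H3" "(\<Union>a\<in>\<Gamma>1. fst a ` K) = H3" by blast
  have "\<exists>\<gamma>\<in>Isom. \<exists>\<eta>\<in>Isom. fst \<gamma> p \<in> K \<and> (\<forall>x\<in>H3. F x = fst \<eta> (F (fst \<gamma> x)))"
    if p: "p \<in> H3" for p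
  proof -
    have "p \<in> (\<Union>a\<in>\<Gamma>1. fst a ` K)" using p K(3) by simp
    then obtain \<gamma>0 k where \<gamma>0: "\<gamma>0 \<in> \<Gamma>1" and k: "k \<in> K" "fst \<gamma>0 k = p"
      by (elim UN_E imageE) (rule that, simp_all)
    \<comment> \<open>\<open>\<gamma> = \<gamma>\<^sub>0\<inverse>\<close> moves \<open>p\<close> into \<open>K\<close>, and \<open>\<eta> = F \<gamma>\<^sub>0 F\<inverse> \<in> \<Gamma>\<^sub>2\<close> gives \<open>F = \<eta> F \<gamma>\<close>.\<close>
    define \<gamma> where "\<gamma> = iso_inv \<gamma>0"
    have \<gamma>0I: "\<gamma>0 \<in> Isom" and \<gamma>I: "\<gamma> \<in> Isom"
      using L1 \<gamma>0 unfolding nice_lattice_def \<gamma>_def by auto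
    have bij\<gamma>0: "bij_betw (fst \<gamma>0) H3 H3" using \<gamma>0I unfolding Isom_def by auto
    obtain \<eta> where \<eta>I: "\<eta> \<in> Isom" and \<eta>: "fst \<eta> = restrict (F \<circ> fst \<gamma>0 \<circ> inv_into H3 F) H3"
      using conj \<gamma>0 L2 unfolding nice_lattice_def by (metis (no_types, lifting) image_iff subsetD)
    have "fst \<gamma> p = k"
      unfolding \<gamma>_def iso_inv_def using p k bij_betw_inv_into_left[OF bij\<gamma>0 subsetD[OF K(2) k(1)]]
      by simp
    moreover have "F x = fst \<eta> (F (fst \<gamma> x))" if x: "x \<in> H3" for x
    proof -
      have "fst \<gamma> x \<in> H3" using Isom_into_H3[OF \<gamma>I x] .
      moreover have "fst \<gamma>0 (fst \<gamma> x) = x"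
        unfolding \<gamma>_def iso_inv_def using x bij_betw_inv_into_right[OF bij\<gamma>0] by simp
      ultimately show ?thesis
        unfolding \<eta> using bijF bij_betw_inv_into_left[OF bijF] by (auto simp: bij_betw_def)
    qed
    ultimately show ?thesis using \<gamma>I \<eta>I k(1) by blast
  qed
  with K(1,2) that show ?thesis by blast
qed

lemma equivariant_pair_recentre:
  assumes "equivariant_pair F f"
  obtains K \<gamma> \<eta> where "compact K" "K \<subseteq> H3"
    "\<And>p. p \<in> H3 \<Longrightarrow> \<gamma> p \<in> Isom \<and> \<eta> p \<in> Isom \<and> fst (\<gamma> p) p \<in> K"
    "\<And>p x. p \<in> H3 \<Longrightarrow> x \<in> H3 \<Longrightarrow> F x = fst (\<eta> p) (F (fst (\<gamma> p) x))"
    "\<And>p. p \<in> H3 \<Longrightarrow> f = snd (\<eta> p) \<circ> f \<circ> snd (\<gamma> p)"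
proof -
  have cF: "bar_continuous F f" and FH: "\<forall>p\<in>H3. F p \<in> H3"
    using assms unfolding equivariant_pair_def bilipschitz_bij_def bij_betw_def by auto
  obtain K where K: "compact K" "K \<subseteq> H3" and recentre: "\<And>p. p \<in> H3 \<Longrightarrow>
      \<exists>\<gamma>\<in>Isom. \<exists>\<eta>\<in>Isom. fst \<gamma> p \<in> K \<and> (\<forall>x\<in>H3. F x = fst \<eta> (F (fst \<gamma> x)))"
    using equivariant_pair_lattice_recentre[OF assms] by blast
  obtain \<gamma> where "\<forall>p\<in>H3. \<gamma> p \<in> Isom \<and> (\<exists>\<eta>\<in>Isom. fst (\<gamma> p) p \<in> K \<and> (\<forall>x\<in>H3. F x = fst \<eta> (F (fst (\<gamma> p) x))))"
    using bchoice[of H3] recentre by (metis (no_types, lifting))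
  then obtain \<eta> where "\<forall>p\<in>H3. \<gamma> p \<in> Isom \<and> \<eta> p \<in> Isom \<and> fst (\<gamma> p) p \<in> K
      \<and> (\<forall>x\<in>H3. F x = fst (\<eta> p) (F (fst (\<gamma> p) x)))"
    using bchoice[of H3] by (metis (no_types, lifting))
  with K that[of K \<gamma> \<eta>] show ?thesis
    using Isom_conj_boundary[OF cF FH] by (metis (no_types, lifting))
qed

lemma derived_seq_recentred_compact:
  assumes "equivariant_pair F f" "derived_seq F f Fs fs"
  obtains K a b where "compact K" "K \<subseteq> H3" "\<And>n. a n \<in> Isom" "\<And>n. b n \<in> Isom"
    "\<And>n. fst (b n) base_point \<in> K"
    "\<And>n p. p \<in> H3 \<Longrightarrow> Fs n p = fst (a n) (F (fst (b n) p))" "\<And>n. fs n = snd (a n) \<circ> f \<circ> snd (b n)"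
proof -
  have FH: "\<forall>p\<in>H3. F p \<in> H3"
    using assms(1) unfolding equivariant_pair_def bilipschitz_bij_def bij_betw_def by auto
  obtain K \<gamma> \<eta> where K: "compact K" "K \<subseteq> H3"
    and \<gamma>\<eta>: "\<And>p. p \<in> H3 \<Longrightarrow> \<gamma> p \<in> Isom \<and> \<eta> p \<in> Isom \<and> fst (\<gamma> p) p \<in> K"
    and int: "\<And>p x. p \<in> H3 \<Longrightarrow> x \<in> H3 \<Longrightarrow> F x = fst (\<eta> p) (F (fst (\<gamma> p) x))"
    and bd: "\<And>p. p \<in> H3 \<Longrightarrow> f = snd (\<eta> p) \<circ> f \<circ> snd (\<gamma> p)"
    using equivariant_pair_recentre[OF assms(1)] by blast
  obtain a0 b0 where ab0: "\<And>n. a0 n \<in> Isom" "\<And>n. b0 n \<in> Isom"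
    and Fs: "\<And>n p. p \<in> H3 \<Longrightarrow> Fs n p = fst (a0 n) (F (fst (b0 n) p))"
    and fs: "\<And>n. fs n = snd (a0 n) \<circ> f \<circ> snd (b0 n)"
    using assms(2) unfolding derived_seq_def by blast
  define p where "p n = fst (b0 n) base_point" for n
  have p: "p n \<in> H3" for n unfolding p_def using Isom_into_H3[OF ab0(2) base_point_in_H3] .
  \<comment> \<open>\<open>a\<^sub>0 F b\<^sub>0 = (a\<^sub>0 \<eta>) F (\<gamma> b\<^sub>0)\<close>\<close>
  define a b where "a n = iso_comp (a0 n) (\<eta> (p n))" "b n = iso_comp (\<gamma> (p n)) (b0 n)" for n
  have ab: "a n \<in> Isom" "b n \<in> Isom" for n
    unfolding a_b_def using iso_comp_in_Isom ab0 \<gamma>\<eta>[OF p] by auto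
  have bK: "fst (b n) base_point \<in> K" for n
    using \<gamma>\<eta>[OF p] unfolding a_b_def iso_comp_def p_def by simp
  have Fs': "Fs n x = fst (a n) (F (fst (b n) x))" if x: "x \<in> H3" for n x
    using Fs[OF x] int[OF p Isom_into_H3[OF ab0(2) x]] Isom_into_H3[OF ab0(2) x]
      Isom_into_H3[OF conjunct1[OF \<gamma>\<eta>[OF p]] Isom_into_H3[OF ab0(2) x]] FH x
    unfolding a_b_def iso_comp_def by simp
  have fs': "fs n = snd (a n) \<circ> f \<circ> snd (b n)" for n
    unfolding fs a_b_def iso_comp_def by (subst (1) bd[OF p, of n]) (simp add: comp_assoc)
  show ?thesis by (rule that[OF K ab bK Fs' fs'])
qed

lemma tame_seq_hbounded:
  assumes "tame_seq Fs" "p \<in> H3" "\<And>n. Fs n p \<in> H3"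
  shows "hbounded (range (\<lambda>n. Fs n p))"
proof -
  obtain q R where "q \<in> H3" "\<And>n. hdist (Fs n p) q \<le> R"
    using assms(1,2) unfolding tame_seq_def by blast
  then have "range (\<lambda>n. Fs n p) \<subseteq> {x \<in> H3. \<exists>q'\<in>{q}. hdist x q' \<le> R}" using assms(3) by auto
  moreover have "hbounded {q}" using \<open>q \<in> H3\<close> by (intro compact_imp_hbounded) auto
  ultimately show ?thesis using hbounded_subset hbounded_hdist_neighbourhood by blast
qed

lemma derived_seq_recentred:
  assumes "equivariant_pair F f" "derived_seq F f Fs fs" "tame_seq Fs"
  obtains a b where "\<And>n. a n \<in> Isom" "\<And>n. b n \<in> Isom"
    "\<And>n p. p \<in> H3 \<Longrightarrow> Fs n p = fst (a n) (F (fst (b n) p))" "\<And>n. fs n = snd (a n) \<circ> f \<circ> snd (b n)"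
    "hbounded (range (\<lambda>n. fst (a n) base_point))" "hbounded (range (\<lambda>n. fst (b n) base_point))"
proof -
  obtain L where FH: "\<forall>p\<in>H3. F p \<in> H3" and lip: "\<forall>p\<in>H3. \<forall>q\<in>H3. hdist (F p) (F q) \<le> L * hdist p q"
    using equivariant_pair_lipschitz[OF assms(1)] by blast
  obtain K a b where K: "compact K" "K \<subseteq> H3" and ab: "\<And>n. a n \<in> Isom" "\<And>n. b n \<in> Isom"
    and bK: "\<And>n. fst (b n) base_point \<in> K"
    and Fs: "\<And>n p. p \<in> H3 \<Longrightarrow> Fs n p = fst (a n) (F (fst (b n) p))"
    and fs: "\<And>n. fs n = snd (a n) \<circ> f \<circ> snd (b n)"
    using derived_seq_recentred_compact[OF assms(1,2)] by blast
  have hb_b: "hbounded (range (\<lambda>n. fst (b n) base_point))"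
    using bK by (intro hbounded_subset[OF compact_imp_hbounded[OF K]]) auto
  have "Fs n base_point \<in> H3" for n
    using Isom_into_H3[OF ab(1) FH[rule_format, OF Isom_into_H3[OF ab(2) base_point_in_H3]]]
    by (simp add: Fs)
  then have "hbounded (range (\<lambda>n. fst (a n) (F (fst (b n) base_point))))"
    using tame_seq_hbounded[OF assms(3) base_point_in_H3] by (simp add: Fs)
  moreover have "hbounded (range (\<lambda>n. F (fst (b n) base_point)))"
    using hbounded_lipschitz_image[OF hb_b FH lip] by (simp add: image_image)
  ultimately have "hbounded (range (\<lambda>n. fst (a n) base_point))"
    by (intro hbounded_Isom_orbit[OF ab(1)]) auto
  with ab Fs fs hb_b that show ?thesis by blast
qed

theorem lemma1p4:
  fixes F :: "hpt \<Rightarrow> hpt" and f :: "spt \<Rightarrow> spt"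
    and Fs :: "nat \<Rightarrow> hpt \<Rightarrow> hpt" and fs :: "nat \<Rightarrow> spt \<Rightarrow> spt"
  assumes "equivariant_pair F f"
    and "derived_seq F f Fs fs"
    and "tame_seq Fs"
  shows "\<exists>a\<in>Isom. \<exists>b\<in>Isom. \<exists>r::nat \<Rightarrow> nat. strict_mono r \<and>
           (\<forall>K. compact K \<and> K \<subseteq> H3 \<longrightarrow>
              (\<forall>e>0. \<forall>\<^sub>F n in sequentially. \<forall>p\<in>K.
                 hdist (Fs (r n) p) (fst a (F (fst b p))) < e)) \<and>
           (\<forall>e>0. \<forall>\<^sub>F n in sequentially. \<forall>x.
                 sdist (fs (r n) x) (snd a (f (snd b x))) < e)"
proof -
  obtain L where FH: "\<forall>p\<in>H3. F p \<in> H3" and lip: "\<forall>p\<in>H3. \<forall>q\<in>H3. hdist (F p) (F q) \<le> L * hdist p q"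
    using equivariant_pair_lipschitz[OF assms(1)] by blast
  have f: "s_continuous f" using assms(1) unfolding equivariant_pair_def s_homeomorphism_def by blast
  obtain a b where ab: "\<And>n. a n \<in> Isom" "\<And>n. b n \<in> Isom"
    and Fs: "\<And>n p. p \<in> H3 \<Longrightarrow> Fs n p = fst (a n) (F (fst (b n) p))"
    and fs: "\<And>n. fs n = snd (a n) \<circ> f \<circ> snd (b n)"
    and hb: "hbounded (range (\<lambda>n. fst (a n) base_point))" "hbounded (range (\<lambda>n. fst (b n) base_point))"
    by (rule derived_seq_recentred[OF assms]) blast
  obtain Pa Pb Pa0 Pb0 r where r: "strict_mono r"
    and Pa: "\<And>n. valid_param (Pa n)" "\<And>n. a n = motion (Pa n)" "valid_param Pa0" "(\<lambda>n. Pa (r n)) \<longlonglongrightarrow> Pa0"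
    and Pb: "\<And>n. valid_param (Pb n)" "\<And>n. b n = motion (Pb n)" "valid_param Pb0" "(\<lambda>n. Pb (r n)) \<longlonglongrightarrow> Pb0"
    by (rule Isom_seqs_convergent_params[OF ab(1) hb(1) ab(2) hb(2)]) blast
  have Fs_motion: "Fs n p = H3_motion (Pa n) (F (H3_motion (Pb n) p))" if "p \<in> H3" for n p
    using Fs[OF that] by (simp add: Pa(2) Pb(2) motion_def)
  have interior: "\<forall>\<^sub>F n in sequentially. \<forall>p\<in>K. hdist (Fs (r n) p) (H3_motion Pa0 (F (H3_motion Pb0 p))) < e"
    if "compact K" "K \<subseteq> H3" "e > 0" for K e
    using H3_motion_sandwich_tendsto[OF Pa(1,3,4) Pb(1,3,4) FH lip compact_imp_hbounded[OF that(1,2)] that(3)]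
    by eventually_elim (use that(2) Fs_motion in auto)
  have boundary: "\<forall>\<^sub>F n in sequentially. \<forall>x. sdist (fs (r n) x) (S_motion Pa0 (f (S_motion Pb0 x))) < e"
    if "e > 0" for e
    using S_motion_sandwich_tendsto[OF Pa(1,3,4) Pb(1,3,4) f that] by (simp add: fs Pa(2) Pb(2) motion_def)
  show ?thesis
    using motion_in_Isom[OF Pa(3)] motion_in_Isom[OF Pb(3)] r interior boundary unfolding motion_def
    by (intro bexI[of _ "(H3_motion Pa0, S_motion Pa0)"] bexI[of _ "(H3_motion Pb0, S_motion Pb0)"]
        exI[of _ r]) auto
qed

end
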